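(* Let $X$ be a compact Hausdorff space, $\mathcal C = C(X)$ the algebra of continuous real-valued functions on $X$ with the supremum norm, $\alpha\colon X\to X$ a continuous map, $\delta\colon \mathcal C\to\mathcal C$ the endomorphism $\delta f = f\circ\alpha$, and $A\colon \mathcal C\to\mathcal C$ a transfer operator for $(\mathcal C,\delta)$. For $\varphi\in\mathcal C$ let $A_\varphi f = A(e^\varphi f)$ and let $\lambda(\varphi)=\lim_{n\to\infty}\frac1n\ln\|A_\varphi^n\mathbf 1\|$ be the spectral potential. Then for every $\mu\in M_\delta(\mathcal C)$, \[ \tau(\mu)=\inf_{\varphi\in\mathcal C}\bigl(\lambda(\varphi)-\mu[\varphi]\bigr), \] where $\tau$ is the $t$-entropy.
   Context: A transfer operator for $(\mathcal C,\delta)$ is a linear operator $A\colon\mathcal C\to\mathcal C$ that is positive (maps nonnegative functions to nonnegative functions) and satisfies the homological identity $A((\delta f)g)=f\,Ag$ for all $f,g\in\mathcal C$. $\mathbf 1$ denotes the constant function $1$. $M(\mathcal C)$ is the set of positive linear functionals $m$ on $\mathcal C$ with $m[\mathbf 1]=1$ (identified with regular Borel probability measures on $X$), and $M_\delta(\mathcal C)=\{\mu\in M(\mathcal C): \mu[\delta f]=\mu[f]\ \forall f\in\mathcal C\}$. A partition of unity is a finite set $D=\{g_1,\dots,g_k\}$ of nonnegative elements of $\mathcal C$ with $g_1+\dots+g_k=\mathbf 1$. For $\mu\in M_\delta(\mathcal C)$, $n\in\mathbb N$ and a partition of unity $D$ put \[ \tau_n(\mu,D)=\sup_{m\in M(\mathcal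 C)}\sum_{g\in D}\mu[g]\ln\frac{m[A^ng]}{\mu[g]},\qquad \tau_n(\mu)=\inf_D\tau_n(\mu,D),\qquad \tau(\mu)=\inf_{n\in\mathbb N}\frac{\tau_n(\mu)}{n}, \] the infimum over $D$ ranging over all partitions of unity; a summand with $\mu[g]=0$ is set to $0$ regardless of $m[A^ng]$, $\ln 0=-\infty$, and if some $g\in D$ has $A^ng=0$ and $\mu[g]>0$ then $\tau(\mu)=-\infty$. $\tau(\mu)$ is called the $t$-entropy. *)

theory Defs
  imports "HOL-Analysis.Analysis" "HOL-Library.Extended_Real"
begin

text \<open>The algebra C(X) of continuous real functions on the (compact Hausdorff) space X,
  here X is the whole type 'a.\<close>
definition CX :: "('a::topological_space \<Rightarrow> real) set" where
  "CX = {f. continuous_on UNIV f}"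

definition supnorm :: "('a \<Rightarrow> real) \<Rightarrow> real" where
  "supnorm f = (SUP x. \<bar>f x\<bar>)"

definition eln :: "real \<Rightarrow> ereal" where
  "eln x = (if x > 0 then ereal (ln x) else -\<infinity>)"

definition linear_on_CX :: "(('a::topological_space \<Rightarrow> real) \<Rightarrow> ('a \<Rightarrow> real)) \<Rightarrow> bool" where
  "linear_on_CX A \<longleftrightarrow> (\<forall>f\<in>CX. A f \<in> CX) \<and>
     (\<forall>f\<in>CX. \<forall>g\<in>CX. A (\<lambda>x. f x + g x) = (\<lambda>x. A f x + A g x)) \<and>
     (\<forall>f\<in>CX. \<forall>c::real. A (\<lambda>x. c * f x) = (\<lambda>x. c * A f x))"

definition transfer_operator ::
  "('a::topological_space \<Rightarrow> 'a) \<Rightarrow> (('a \<Rightarrow> real) \<Rightarrow> ('a \<Rightarrow> real)) \<Rightarrow> bool" where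
  "transfer_operator \<alpha> A \<longleftrightarrow> linear_on_CX A \<and>
     (\<forall>f\<in>CX. (\<forall>x. f x \<ge> 0) \<longrightarrow> (\<forall>x. A f x \<ge> 0)) \<and>
     (\<forall>f\<in>CX. \<forall>g\<in>CX. A (\<lambda>x. f (\<alpha> x) * g x) = (\<lambda>x. f x * A g x))"

definition states :: "(('a::topological_space \<Rightarrow> real) \<Rightarrow> real) set" where
  "states = {m. (\<forall>f\<in>CX. \<forall>g\<in>CX. m (\<lambda>x. f x + g x) = m f + m g) \<and>
                (\<forall>f\<in>CX. \<forall>c::real. m (\<lambda>x. c * f x) = c * m f) \<and>
                (\<forall>f\<in>CX. (\<forall>x. f x \<ge> 0) \<longrightarrow> m f \<ge> 0) \<and>
                m (\<lambda>x. 1) = 1}"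

definition inv_states :: "('a::topological_space \<Rightarrow> 'a) \<Rightarrow> (('a \<Rightarrow> real) \<Rightarrow> real) set" where
  "inv_states \<alpha> = {\<mu>\<in>states. \<forall>f\<in>CX. \<mu> (\<lambda>x. f (\<alpha> x)) = \<mu> f}"

definition partition_of_unity :: "('a::topological_space \<Rightarrow> real) set \<Rightarrow> bool" where
  "partition_of_unity D \<longleftrightarrow> finite D \<and> D \<subseteq> CX \<and> (\<forall>g\<in>D. \<forall>x. g x \<ge> 0) \<and>
     (\<forall>x. (\<Sum>g\<in>D. g x) = 1)"

definition tau_nD ::
  "(('a::topological_space \<Rightarrow> real) \<Rightarrow> ('a \<Rightarrow> real)) \<Rightarrow> (('a \<Rightarrow> real) \<Rightarrow> real) \<Rightarrow> nat
     \<Rightarrow> ('a \<Rightarrow> real) set \<Rightarrow> ereal" where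
  "tau_nD A \<mu> n D = (SUP m\<in>states. \<Sum>g\<in>D.
      (if \<mu> g = 0 then 0 else ereal (\<mu> g) * eln (m ((A ^^ n) g) / \<mu> g)))"

definition tau_n ::
  "(('a::topological_space \<Rightarrow> real) \<Rightarrow> ('a \<Rightarrow> real)) \<Rightarrow> (('a \<Rightarrow> real) \<Rightarrow> real) \<Rightarrow> nat \<Rightarrow> ereal" where
  "tau_n A \<mu> n = (INF D\<in>{D. partition_of_unity D}. tau_nD A \<mu> n D)"

definition t_entropy ::
  "(('a::topological_space \<Rightarrow> real) \<Rightarrow> ('a \<Rightarrow> real)) \<Rightarrow> (('a \<Rightarrow> real) \<Rightarrow> real) \<Rightarrow> ereal" where
  "t_entropy A \<mu> = (INF n\<in>{1..}. tau_n A \<mu> n / ereal (real n))"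

definition weighted_op ::
  "(('a \<Rightarrow> real) \<Rightarrow> ('a \<Rightarrow> real)) \<Rightarrow> ('a \<Rightarrow> real) \<Rightarrow> ('a \<Rightarrow> real) \<Rightarrow> ('a \<Rightarrow> real)" where
  "weighted_op A \<phi> f = A (\<lambda>x. exp (\<phi> x) * f x)"

definition spectral_potential ::
  "(('a \<Rightarrow> real) \<Rightarrow> ('a \<Rightarrow> real)) \<Rightarrow> ('a \<Rightarrow> real) \<Rightarrow> ereal" where
  "spectral_potential A \<phi> =
     lim (\<lambda>n. eln (supnorm ((weighted_op A \<phi> ^^ n) (\<lambda>x. 1))) / ereal (real n))"

end

theory Submission
  imports Defs
begin

text \<open>
  Upper bound. Given \<open>\<phi>\<close> and \<open>n\<close>, take a partition of unity \<open>D\<close> on whose pieces the Birkhoff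
  sum \<open>S\<^sub>n\<phi> = \<Sum>\<^sub>j\<^sub><\<^sub>n \<phi> \<circ> \<alpha>\<^sup>j\<close> oscillates by at most \<open>\<epsilon>\<close>. Concavity of \<open>ln\<close> gives, for
  every state \<open>m\<close>, \<open>\<Sum>\<^sub>g \<mu>[g] ln (m[A\<^sup>n g] / \<mu>[g]) \<le> ln \<parallel>A\<^sup>n exp (S\<^sub>n\<phi>)\<parallel> - \<mu>[S\<^sub>n\<phi>] + 2\<epsilon>\<close>.
  Here \<open>A\<^sup>n exp (S\<^sub>n\<phi>) = A\<^sub>\<phi>\<^sup>n 1\<close>, \<open>\<mu>[S\<^sub>n\<phi>] = n \<mu>[\<phi>]\<close> by invariance, and
  \<open>\<lambda>(\<phi>) = inf\<^sub>n ln \<parallel>A\<^sub>\<phi>\<^sup>n 1\<parallel> / n\<close> by submultiplicativity and Fekete's lemma; hence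
  \<open>\<tau>(\<mu>) \<le> \<lambda>(\<phi>) - \<mu>[\<phi>]\<close>.

  Lower bound. If \<open>\<tau>\<^sub>n(\<mu>, D) < K\<close>, maximize the concave function
  \<open>v \<mapsto> \<Sum>\<^sub>g \<mu>[g] ln (v\<^sub>g / \<mu>[g])\<close> over the closure of the bounded convex set of vectors
  \<open>(m[A\<^sup>n g])\<^sub>g\<close>, \<open>m\<close> a state. At a maximizer \<open>v\<close> the first-order condition says
  \<open>\<Sum>\<^sub>g \<mu>[g] m[A\<^sup>n g] / v\<^sub>g \<le> 1\<close> for every state \<open>m\<close>, i.e. \<open>\<parallel>A\<^sup>n exp \<psi>\<parallel> \<le> 1\<close> for
  \<open>\<psi> = ln \<Sum>\<^sub>g (\<mu>[g] / v\<^sub>g) g\<close>, while Jensen's inequality gives \<open>\<mu>[\<psi>] \<ge> -\<tau>\<^sub>n(\<mu>, D)\<close>.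
  Finally \<open>\<lambda>(\<psi> / n) \<le> ln \<parallel>A\<^sup>n exp \<psi>\<parallel> / n\<close>: cut orbit segments of length \<open>n k\<close> into their
  \<open>n\<close> residue classes and use convexity of \<open>exp\<close>.
\<close>

lemma CX_iff: "f \<in> CX \<longleftrightarrow> continuous_on UNIV f"
  by (simp add: CX_def)

lemma CX_const [intro]: "(\<lambda>x. c) \<in> CX"
  by (simp add: CX_iff)

lemma CX_add [intro]: "f \<in> CX \<Longrightarrow> g \<in> CX \<Longrightarrow> (\<lambda>x. f x + g x) \<in> CX"
  by (auto simp: CX_iff intro!: continuous_intros)

lemma CX_diff [intro]: "f \<in> CX \<Longrightarrow> g \<in> CX \<Longrightarrow> (\<lambda>x. f x - g x) \<in> CX"
  by (auto simp: CX_iff intro!: continuous_intros)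

lemma CX_mult [intro]: "f \<in> CX \<Longrightarrow> g \<in> CX \<Longrightarrow> (\<lambda>x. f x * g x) \<in> CX"
  by (auto simp: CX_iff intro!: continuous_intros)

lemma CX_scale [intro]: "f \<in> CX \<Longrightarrow> (\<lambda>x. c * f x) \<in> CX"
  by (auto simp: CX_iff intro!: continuous_intros)

lemma CX_divide_const [intro]: "f \<in> CX \<Longrightarrow> (\<lambda>x. f x / c) \<in> CX"
  using CX_scale[of f "1/c"] by simp

lemma CX_exp [intro]: "f \<in> CX \<Longrightarrow> (\<lambda>x. exp (f x)) \<in> CX"
  by (auto simp: CX_iff intro!: continuous_intros)

lemma CX_ln [intro]:
  assumes "f \<in> CX" "\<And>x. f x > 0"
  shows "(\<lambda>x. ln (f x)) \<in> CX"
proof -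
  have "f x \<noteq> 0" for x
    using assms(2)[of x] by simp
  then show ?thesis
    using assms(1) by (auto simp: CX_iff intro!: continuous_intros)
qed

lemma CX_sum [intro]: "(\<And>i. i \<in> I \<Longrightarrow> f i \<in> CX) \<Longrightarrow> (\<lambda>x. \<Sum>i\<in>I. f i x) \<in> CX"
  unfolding CX_iff by (intro continuous_intros) auto

lemma CX_compose:
  "f \<in> CX \<Longrightarrow> continuous_on UNIV (h :: 'a::topological_space \<Rightarrow> 'a) \<Longrightarrow> (\<lambda>x. f (h x)) \<in> CX"
  unfolding CX_iff by (rule continuous_on_compose2[of UNIV f UNIV h]) auto

lemma CX_compose_real:
  "f \<in> CX \<Longrightarrow> continuous_on UNIV (h :: real \<Rightarrow> real) \<Longrightarrow> (\<lambda>x. h (f x)) \<in> CX"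
  unfolding CX_iff by (rule continuous_on_compose2[of UNIV h UNIV f]) auto

lemma continuous_on_funpow:
  "continuous_on UNIV (f :: 'a::topological_space \<Rightarrow> 'a) \<Longrightarrow> continuous_on UNIV (f ^^ n)"
proof (induction n)
  case 0
  then show ?case by (simp add: continuous_on_id)
next
  case (Suc n)
  then show ?case
    by (simp del: funpow.simps add: funpow_Suc_right o_def)
       (rule continuous_on_compose2[of UNIV "f ^^ n" UNIV f], auto)
qed

lemma CX_bounded:
  fixes f :: "'a::topological_space \<Rightarrow> real"
  assumes "compact (UNIV :: 'a set)" "f \<in> CX"
  shows "\<exists>B. \<forall>x. \<bar>f x\<bar> \<le> B"
proof -
  have "compact (range f)"
    using assms by (metis CX_iff compact_continuous_image)
  then have "bounded (range f)"
    by (rule compact_imp_bounded)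
  then show ?thesis
    by (auto simp: bounded_real)
qed

lemma abs_le_supnorm:
  fixes f :: "'a::topological_space \<Rightarrow> real"
  assumes "compact (UNIV :: 'a set)" "f \<in> CX"
  shows "\<bar>f x\<bar> \<le> supnorm f"
proof -
  obtain B where "\<forall>x. \<bar>f x\<bar> \<le> B"
    using CX_bounded[OF assms] by auto
  then have "bdd_above (range (\<lambda>x. \<bar>f x\<bar>))"
    by (auto intro: bdd_aboveI)
  then show ?thesis
    unfolding supnorm_def by (rule cSUP_upper[rotated]) simp
qed

lemma le_supnorm:
  fixes f :: "'a::topological_space \<Rightarrow> real"
  assumes "compact (UNIV :: 'a set)" "f \<in> CX"
  shows "f x \<le> supnorm f"
  using abs_le_supnorm[OF assms, of x] by linarith

lemma supnorm_nonneg: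
  fixes f :: "'a::topological_space \<Rightarrow> real"
  assumes "compact (UNIV :: 'a set)" "f \<in> CX"
  shows "0 \<le> supnorm f"
  using abs_le_supnorm[OF assms, of undefined] by linarith

lemma supnorm_le_nonneg: "(\<And>x. 0 \<le> f x) \<Longrightarrow> (\<And>x. f x \<le> c) \<Longrightarrow> supnorm f \<le> c"
  unfolding supnorm_def by (rule cSUP_least) auto

definition positive_op :: "(('a::topological_space \<Rightarrow> real) \<Rightarrow> ('a \<Rightarrow> real)) \<Rightarrow> bool" where
  "positive_op T \<longleftrightarrow> linear_on_CX T \<and> (\<forall>f\<in>CX. (\<forall>x. f x \<ge> 0) \<longrightarrow> (\<forall>x. T f x \<ge> 0))"

lemma positive_op_CX: "positive_op T \<Longrightarrow> f \<in> CX \<Longrightarrow> T f \<in> CX"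
  by (auto simp: positive_op_def linear_on_CX_def)

lemma positive_op_add:
  "positive_op T \<Longrightarrow> f \<in> CX \<Longrightarrow> g \<in> CX \<Longrightarrow> T (\<lambda>x. f x + g x) = (\<lambda>x. T f x + T g x)"
  by (auto simp: positive_op_def linear_on_CX_def)

lemma positive_op_scale: "positive_op T \<Longrightarrow> f \<in> CX \<Longrightarrow> T (\<lambda>x. c * f x) = (\<lambda>x. c * T f x)"
  by (auto simp: positive_op_def linear_on_CX_def)

lemma positive_op_nonneg: "positive_op T \<Longrightarrow> f \<in> CX \<Longrightarrow> (\<And>x. f x \<ge> 0) \<Longrightarrow> T f x \<ge> 0"
  by (auto simp: positive_op_def)

lemma positive_op_zero: "positive_op T \<Longrightarrow> T (\<lambda>x. 0) = (\<lambda>x. 0)"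
  using positive_op_scale[of T "\<lambda>x. 0" 0] by auto

lemma positive_op_diff:
  assumes "positive_op T" "f \<in> CX" "g \<in> CX"
  shows "T (\<lambda>x. f x - g x) = (\<lambda>x. T f x - T g x)"
  using positive_op_add[OF assms(1,2) CX_scale[OF assms(3), of "-1"]]
    positive_op_scale[OF assms(1,3), of "-1"] by simp

lemma positive_op_mono:
  "positive_op T \<Longrightarrow> f \<in> CX \<Longrightarrow> g \<in> CX \<Longrightarrow> (\<And>x. f x \<le> g x) \<Longrightarrow> T f x \<le> T g x"
  using positive_op_nonneg[of T "\<lambda>x. g x - f x" x] positive_op_diff[of T g f] by auto

lemma positive_op_sum:
  assumes "positive_op T" "finite I" "\<And>i. i \<in> I \<Longrightarrow> f i \<in> CX"
  shows "T (\<lambda>x. \<Sum>i\<in>I. f i x) = (\<lambda>x. \<Sum>i\<in>I. T (f i) x)"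
  using assms(2,3)
proof (induction I rule: finite_induct)
  case empty
  then show ?case by (simp add: positive_op_zero[OF assms(1)])
next
  case (insert a I)
  then show ?case by (simp add: positive_op_add[OF assms(1)] CX_sum)
qed

lemma positive_op_linear_combination:
  assumes "positive_op T" "finite I" "\<And>i. i \<in> I \<Longrightarrow> f i \<in> CX"
  shows "T (\<lambda>x. \<Sum>i\<in>I. a i * f i x) = (\<lambda>x. \<Sum>i\<in>I. a i * T (f i) x)"
proof -
  have "T (\<lambda>x. \<Sum>i\<in>I. a i * f i x) = (\<lambda>x. \<Sum>i\<in>I. T (\<lambda>x. a i * f i x) x)"
    using assms by (intro positive_op_sum) auto
  also have "\<dots> = (\<lambda>x. \<Sum>i\<in>I. a i * T (f i) x)"
    using positive_op_scale[OF assms(1,3)] by simp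
  finally show ?thesis .
qed

lemma positive_op_le_supnorm:
  fixes f :: "'a::topological_space \<Rightarrow> real"
  assumes "compact (UNIV :: 'a set)" "positive_op T" "f \<in> CX"
  shows "T f x \<le> supnorm f * T (\<lambda>x. 1) x"
  using positive_op_mono[OF assms(2,3) CX_const le_supnorm[OF assms(1,3)]]
    positive_op_scale[OF assms(2) CX_const[of 1], of "supnorm f"] by simp

lemma positive_op_const_bound:
  fixes f :: "'a::topological_space \<Rightarrow> real"
  assumes "compact (UNIV :: 'a set)" "positive_op T" "f \<in> CX" "\<And>x. f x \<le> c" "c \<ge> 0"
  shows "T f x \<le> c * supnorm (T (\<lambda>x. 1))"
proof -
  have "T f x \<le> T (\<lambda>x. c) x"
    using positive_op_mono[OF assms(2,3) CX_const assms(4)] .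
  also have "\<dots> = c * T (\<lambda>x. 1) x"
    using positive_op_scale[OF assms(2) CX_const[of 1], of c] by simp
  also have "\<dots> \<le> c * supnorm (T (\<lambda>x. 1))"
    using le_supnorm[OF assms(1) positive_op_CX[OF assms(2) CX_const]] assms(5)
    by (intro mult_left_mono) auto
  finally show ?thesis .
qed

lemma positive_op_comp: "positive_op T \<Longrightarrow> positive_op U \<Longrightarrow> positive_op (T \<circ> U)"
  unfolding positive_op_def linear_on_CX_def by (auto simp: o_def)

lemma positive_op_funpow: "positive_op T \<Longrightarrow> positive_op (T ^^ n)"
proof (induction n)
  case 0
  then show ?case by (simp add: positive_op_def linear_on_CX_def)
next
  case (Suc n)
  then show ?case
    unfolding funpow.simps(2) by (intro positive_op_comp)
qed

lemma positive_op_weighted: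
  assumes T: "positive_op T" and \<phi>: "\<phi> \<in> CX"
  shows "positive_op (weighted_op T \<phi>)"
proof -
  have exp_CX: "(\<lambda>x. exp (\<phi> x) * f x) \<in> CX" if "f \<in> CX" for f
    using that \<phi> by auto
  have add: "weighted_op T \<phi> (\<lambda>x. f x + g x) = (\<lambda>x. weighted_op T \<phi> f x + weighted_op T \<phi> g x)"
    if "f \<in> CX" "g \<in> CX" for f g
    using positive_op_add[OF T exp_CX[OF that(1)] exp_CX[OF that(2)]]
    by (simp add: weighted_op_def distrib_left)
  have scale: "weighted_op T \<phi> (\<lambda>x. c * f x) = (\<lambda>x. c * weighted_op T \<phi> f x)"
    if "f \<in> CX" for f c
    using positive_op_scale[OF T exp_CX[OF that], of c]
    by (simp add: weighted_op_def mult.left_commute)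
  have closed: "weighted_op T \<phi> f \<in> CX" if "f \<in> CX" for f
    using positive_op_CX[OF T exp_CX[OF that]] by (simp add: weighted_op_def)
  have nonneg: "0 \<le> weighted_op T \<phi> f x" if "f \<in> CX" "\<forall>x. 0 \<le> f x" for f x
    using positive_op_nonneg[OF T exp_CX[OF that(1)]] that(2)
    by (simp add: weighted_op_def)
  show ?thesis
    unfolding positive_op_def linear_on_CX_def using add scale closed nonneg by simp
qed

lemma transfer_operator_positive_op: "transfer_operator \<alpha> A \<Longrightarrow> positive_op A"
  by (simp add: transfer_operator_def positive_op_def)

lemma transfer_operator_funpow:
  assumes "transfer_operator \<alpha> A" "continuous_on UNIV \<alpha>" "f \<in> CX" "g \<in> CX"
  shows "(A ^^ n) (\<lambda>x. f ((\<alpha> ^^ n) x) * g x) = (\<lambda>x. f x * (A ^^ n) g x)"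
  using assms(3)
proof (induction n arbitrary: f)
  case 0
  then show ?case by simp
next
  case (Suc n)
  have "(\<lambda>x. f (\<alpha> x)) \<in> CX"
    using Suc.prems assms(2) by (rule CX_compose)
  then have "(A ^^ Suc n) (\<lambda>x. f ((\<alpha> ^^ Suc n) x) * g x) = A (\<lambda>x. f (\<alpha> x) * (A ^^ n) g x)"
    using Suc.IH[of "\<lambda>x. f (\<alpha> x)"] by simp
  also have "\<dots> = (\<lambda>x. f x * (A ^^ Suc n) g x)"
    using assms(1,4) Suc.prems
      positive_op_CX[OF positive_op_funpow[OF transfer_operator_positive_op[OF assms(1)]]]
    by (auto simp: transfer_operator_def)
  finally show ?case .
qed

lemma states_add: "m \<in> states \<Longrightarrow> f \<in> CX \<Longrightarrow> g \<in> CX \<Longrightarrow> m (\<lambda>x. f x + g x) = m f + m g"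
  by (auto simp: states_def)

lemma states_scale: "m \<in> states \<Longrightarrow> f \<in> CX \<Longrightarrow> m (\<lambda>x. c * f x) = c * m f"
  by (auto simp: states_def)

lemma states_nonneg: "m \<in> states \<Longrightarrow> f \<in> CX \<Longrightarrow> (\<And>x. f x \<ge> 0) \<Longrightarrow> m f \<ge> 0"
  by (auto simp: states_def)

lemma states_const: "m \<in> states \<Longrightarrow> m (\<lambda>x. c) = c"
  using states_scale[of m "\<lambda>x. 1" c] by (auto simp: states_def)

lemma states_diff:
  assumes "m \<in> states" "f \<in> CX" "g \<in> CX"
  shows "m (\<lambda>x. f x - g x) = m f - m g"
  using states_add[OF assms(1,2) CX_scale[OF assms(3), of "-1"]]
    states_scale[OF assms(1,3), of "-1"] by simp

lemma states_mono: "m \<in> states \<Longrightarrow> f \<in> CX \<Longrightarrow> g \<in> CX \<Longrightarrow> (\<And>x. f x \<le> g x) \<Longrightarrow> m f \<le> m g"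
  using states_nonneg[of m "\<lambda>x. g x - f x"] states_diff[of m g f] by auto

lemma states_sum:
  assumes "m \<in> states" "finite I" "\<And>i. i \<in> I \<Longrightarrow> f i \<in> CX"
  shows "m (\<lambda>x. \<Sum>i\<in>I. f i x) = (\<Sum>i\<in>I. m (f i))"
  using assms(2,3)
proof (induction I rule: finite_induct)
  case empty
  then show ?case using states_const[OF assms(1), of 0] by simp
next
  case (insert a I)
  then show ?case by (simp add: states_add[OF assms(1)] CX_sum)
qed

lemma states_linear_combination:
  assumes "m \<in> states" "finite I" "\<And>i. i \<in> I \<Longrightarrow> f i \<in> CX"
  shows "m (\<lambda>x. \<Sum>i\<in>I. a i * f i x) = (\<Sum>i\<in>I. a i * m (f i))"
proof -
  have "m (\<lambda>x. \<Sum>i\<in>I. a i * f i x) = (\<Sum>i\<in>I. m (\<lambda>x. a i * f i x))"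
    using assms by (intro states_sum) auto
  also have "\<dots> = (\<Sum>i\<in>I. a i * m (f i))"
    using states_scale[OF assms(1,3)] by simp
  finally show ?thesis .
qed

lemma states_le_supnorm:
  fixes f :: "'a::topological_space \<Rightarrow> real"
  shows "compact (UNIV :: 'a set) \<Longrightarrow> m \<in> states \<Longrightarrow> f \<in> CX \<Longrightarrow> m f \<le> supnorm f"
  using states_mono[of m f "\<lambda>x. supnorm f"] states_const[of m "supnorm f"] le_supnorm by auto

lemma states_point_eval: "(\<lambda>f. f x) \<in> states"
  by (auto simp: states_def)

lemma states_convex:
  assumes "m1 \<in> states" "m2 \<in> states" "0 \<le> t" "t \<le> 1"
  shows "(\<lambda>f. (1 - t) * m1 f + t * m2 f) \<in> states"
proof -
  have "0 \<le> (1 - t) * m1 f + t * m2 f" if "f \<in> CX" "\<forall>x. 0 \<le> f x" for f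
    using assms that states_nonneg[of m1 f] states_nonneg[of m2 f] by simp
  then show ?thesis
    using assms unfolding states_def by (auto simp: algebra_simps)
qed

lemma states_average_point_evals:
  assumes "finite I" "I \<noteq> {}"
  shows "(\<lambda>f. (\<Sum>i\<in>I. f (p i)) / card I) \<in> states"
  using assms unfolding states_def
  by (auto simp: sum.distrib sum_distrib_left add_divide_distrib
      intro!: divide_nonneg_nonneg sum_nonneg)

lemma eln_pos: "x > 0 \<Longrightarrow> eln x = ereal (ln x)"
  by (simp add: eln_def)

lemma eln_nonpos: "x \<le> 0 \<Longrightarrow> eln x = -\<infinity>"
  by (simp add: eln_def)

lemma eln_not_PInf [simp]: "eln x \<noteq> \<infinity>"
  by (simp add: eln_def)

lemma eln_mono: "x \<le> y \<Longrightarrow> eln x \<le> eln y"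
  by (auto simp: eln_def)

lemma eln_mult: "0 \<le> x \<Longrightarrow> 0 \<le> y \<Longrightarrow> eln (x * y) = eln x + eln y"
  by (auto simp: eln_def ln_mult zero_less_mult_iff)

lemma eln_diff_less:
  assumes "N \<le> B" "ln B - a < K"
  shows "eln N - ereal a < ereal K"
proof (cases "N > 0")
  case True
  then have "ln N \<le> ln B"
    using assms(1) by simp
  then show ?thesis
    using True assms(2) by (simp add: eln_pos)
qed (simp add: eln_nonpos)

lemma exists_pos_add_mult_less:
  fixes H c :: real
  assumes "0 \<le> H" "1 < c"
  shows "\<exists>\<epsilon>>0. 1 + \<epsilon> * H < c"
proof (intro exI conjI)
  have "(c - 1) / (H + 1) * H = (c - 1) * (H / (H + 1))"
    by simp
  also have "\<dots> < (c - 1) * 1"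
    using assms by (intro mult_strict_left_mono) auto
  finally show "1 + (c - 1) / (H + 1) * H < c"
    by simp
  show "(c - 1) / (H + 1) > 0"
    using assms by simp
qed

lemma subadditive_quotient_bound:
  fixes b :: "nat \<Rightarrow> real"
  assumes sub: "\<And>n m. b (n + m) \<le> b n + b m" and m: "m \<ge> 1"
  shows "\<exists>C. \<forall>n\<ge>1. b n / n \<le> b m / m + C / n"
proof -
  have multiple: "b (q * m + r) \<le> q * b m + b r" for q r
  proof (induction q)
    case 0
    then show ?case by simp
  next
    case (Suc q)
    have "b (Suc q * m + r) \<le> b m + b (q * m + r)"
      using sub[of m "q * m + r"] by (simp add: algebra_simps)
    then show ?case
      using Suc by (simp add: algebra_simps)
  qed
  define R where "R = Max ((\<lambda>r. \<bar>b r\<bar>) ` {..<m})"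
  have R: "\<bar>b r\<bar> \<le> R" if "r < m" for r
    unfolding R_def using that by (intro Max_ge) auto
  define C where "C = \<bar>b m\<bar> + R"
  have "b n / n \<le> b m / m + C / n" if n: "n \<ge> 1" for n
  proof -
    define q where "q = n div m"
    define r where "r = n mod m"
    have nqr: "n = q * m + r" and rm: "r < m"
      using m unfolding q_def r_def by simp_all
    have mpos: "(0::real) < m"
      using m by simp
    have "real n = real q * m + r"
      using nqr by simp
    then have q_le: "real q * m \<le> n" and q_ge: "real n - m \<le> real q * m"
      using rm by auto
    have "real q * b m \<le> n * b m / m + \<bar>b m\<bar>"
    proof (cases "b m \<ge> 0")
      case True
      have "real q \<le> n / m"
        using q_le mpos by (simp add: field_simps)
      then show ?thesis
        using mult_right_mono[OF _ True] by fastforce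
    next
      case False
      have "n / m - 1 \<le> real q"
        using q_ge mpos by (simp add: field_simps)
      then have "real q * b m \<le> (n / m - 1) * b m"
        using False by (intro mult_right_mono_neg) auto
      then show ?thesis
        using False by (simp add: algebra_simps)
    qed
    then have "b n \<le> n * b m / m + C"
      using multiple[of q r] R[OF rm] nqr unfolding C_def by simp
    then have "b n / n \<le> (n * b m / m + C) / n"
      using n by (intro divide_right_mono) auto
    also have "\<dots> = b m / m + C / n"
      using n by (simp add: field_simps)
    finally show ?thesis .
  qed
  then show ?thesis by blast
qed

lemma subadditive_minf_absorbing:
  fixes a :: "nat \<Rightarrow> ereal"
  assumes fin: "\<And>n. a n \<noteq> \<infinity>" and sub: "\<And>n m. a (n + m) \<le> a n + a m"
    and "a k = -\<infinity>" "n \<ge> k"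
  shows "a n = -\<infinity>"
proof -
  have "a n \<le> a k + a (n - k)"
    using sub[of k "n - k"] assms(4) by simp
  then show ?thesis
    using assms(3) fin[of "n - k"] by (cases "a (n - k)") auto
qed

lemma subadditive_eventually_less:
  fixes b :: "nat \<Rightarrow> real"
  assumes sub: "\<And>n m. b (n + m) \<le> b n + b m" and m: "m \<ge> 1" "b m / m < Y"
  shows "\<forall>\<^sub>F n in sequentially. b n / n < Y"
proof -
  obtain C where C: "\<forall>n\<ge>1. b n / n \<le> b m / m + C / n"
    using subadditive_quotient_bound[OF sub m(1)] by blast
  have "(\<lambda>n. b m / m + C / real n) \<longlonglongrightarrow> b m / m + 0"
    by (intro tendsto_add tendsto_const lim_const_over_n)
  then have "\<forall>\<^sub>F n in sequentially. b m / m + C / real n < Y"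
    using m(2) by (intro order_tendstoD) auto
  moreover have "\<forall>\<^sub>F n in sequentially. n \<ge> (1::nat)"
    by (rule eventually_ge_at_top)
  ultimately show ?thesis
    by eventually_elim (use C in fastforce)
qed

lemma fekete_ereal:
  fixes a :: "nat \<Rightarrow> ereal"
  assumes fin: "\<And>n. a n \<noteq> \<infinity>" and sub: "\<And>n m. a (n + m) \<le> a n + a m"
  shows "(\<lambda>n. a n / ereal (real n)) \<longlonglongrightarrow> (INF n\<in>{1..}. a n / ereal (real n))"
proof (rule order_tendstoI)
  let ?L = "INF n\<in>{1..}. a n / ereal (real n)"
  fix y
  assume "y < ?L"
  then show "\<forall>\<^sub>F n in sequentially. y < a n / ereal (real n)"
    unfolding eventually_sequentially
    by (intro exI[of _ 1] allI impI) (auto intro: less_le_trans INF_lower)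
next
  let ?L = "INF n\<in>{1..}. a n / ereal (real n)"
  fix y
  assume "?L < y"
  then obtain m where m: "m \<ge> 1" "a m / ereal (real m) < y"
    by (auto simp: INF_less_iff)
  then have y_not_MInf: "y \<noteq> -\<infinity>"
    by auto
  show "\<forall>\<^sub>F n in sequentially. a n / ereal (real n) < y"
  proof (cases "\<exists>k\<ge>1. a k = -\<infinity>")
    case True
    then obtain k where "a k = -\<infinity>"
      by blast
    then have "a n / ereal (real n) < y" if "n \<ge> k" for n
      using subadditive_minf_absorbing[OF fin sub _ that] y_not_MInf
      by (cases n) auto
    then show ?thesis
      unfolding eventually_sequentially by blast
  next
    case False
    have "a 0 \<noteq> -\<infinity>"
      using subadditive_minf_absorbing[OF fin sub, of 0 1] False by auto
    then have "\<bar>a n\<bar> \<noteq> \<infinity>" for n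
      using False fin[of n] by (cases n) auto
    define b where "b n = real_of_ereal (a n)" for n
    have ab: "a n = ereal (b n)" for n
      using \<open>\<bar>a n\<bar> \<noteq> \<infinity>\<close> unfolding b_def by (cases "a n") auto
    have sub_b: "b (n + m) \<le> b n + b m" for n m
      using sub[of n m] by (simp add: ab)
    have div: "a n / ereal (real n) = ereal (b n / n)" if "n \<ge> 1" for n
      using that by (simp add: ab ereal_divide)
    have "\<forall>\<^sub>F n in sequentially. n \<ge> (1::nat)"
      by (rule eventually_ge_at_top)
    moreover have "\<forall>\<^sub>F n in sequentially. ereal (b n / n) < y"
    proof (cases y)
      case (real Y)
      then show ?thesis
        using subadditive_eventually_less[OF sub_b m(1), of Y] m div[OF m(1)] by simp
    qed (use y_not_MInf in auto)
    ultimately show ?thesis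
      by eventually_elim (simp add: div)
  qed
qed

lemma exp_sum_le_sum_exp:
  fixes c y :: "'b \<Rightarrow> real"
  assumes "finite S" "S \<noteq> {}" "\<And>i. i \<in> S \<Longrightarrow> c i \<ge> 0" "sum c S = 1"
  shows "exp (\<Sum>i\<in>S. c i * y i) \<le> (\<Sum>i\<in>S. c i * exp (y i))"
  using convex_on_sum[OF assms(1,2) exp_convex assms(4), of y] assms(3) by simp

lemma sum_mult_ln_le_ln_sum:
  fixes p w :: "'b \<Rightarrow> real"
  assumes "finite S" "\<And>i. i \<in> S \<Longrightarrow> p i \<ge> 0" "\<And>i. i \<in> S \<Longrightarrow> w i > 0" "sum p S = 1"
  shows "(\<Sum>i\<in>S. p i * ln (w i)) \<le> ln (\<Sum>i\<in>S. p i * w i)"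
proof -
  have "exp (\<Sum>i\<in>S. p i * ln (w i)) \<le> (\<Sum>i\<in>S. p i * exp (ln (w i)))"
    using assms by (intro exp_sum_le_sum_exp) auto
  also have "\<dots> = (\<Sum>i\<in>S. p i * w i)"
    using assms(3) by (intro sum.cong) auto
  finally have "exp (\<Sum>i\<in>S. p i * ln (w i)) \<le> (\<Sum>i\<in>S. p i * w i)" .
  moreover obtain i where "i \<in> S" "p i > 0"
    using assms(2,4) by (metis less_eq_real_def sum.neutral zero_neq_one)
  then have "0 < (\<Sum>i\<in>S. p i * w i)"
    using assms by (intro sum_pos2[of _ i]) (auto intro!: mult_nonneg_nonneg intro: less_imp_le)
  ultimately show ?thesis
    by (metis exp_le_cancel_iff exp_ln)
qed

lemma entropy_sum_le_ln_sum_exp: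
  fixes c x s :: "'b \<Rightarrow> real"
  assumes S: "finite S" and c: "\<And>g. g \<in> S \<Longrightarrow> c g > 0" "sum c S = 1"
    and x: "\<And>g. g \<in> S \<Longrightarrow> x g > 0"
  shows "(\<Sum>g\<in>S. c g * ln (x g / c g)) \<le> ln (\<Sum>g\<in>S. exp (s g) * x g) - (\<Sum>g\<in>S. c g * s g)"
proof -
  have "c g * ln (x g / c g) + c g * s g = c g * ln (exp (s g) * x g / c g)" if "g \<in> S" for g
    using c(1)[OF that] x[OF that] by (simp add: ln_div ln_mult algebra_simps)
  then have "(\<Sum>g\<in>S. c g * ln (x g / c g)) + (\<Sum>g\<in>S. c g * s g)
      = (\<Sum>g\<in>S. c g * ln (exp (s g) * x g / c g))"
    by (simp add: sum.distrib[symmetric])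
  also have "\<dots> \<le> ln (\<Sum>g\<in>S. c g * (exp (s g) * x g / c g))"
    using S c x by (intro sum_mult_ln_le_ln_sum) (auto intro: less_imp_le)
  also have "\<dots> = ln (\<Sum>g\<in>S. exp (s g) * x g)"
    using c(1) by (intro arg_cong[where f = ln] sum.cong) (auto dest!: c(1))
  finally show ?thesis
    by simp
qed

lemma ln_one_plus_ge_quadratic:
  fixes z :: real
  assumes "\<bar>z\<bar> \<le> 1/2"
  shows "z - 2 * z\<^sup>2 \<le> ln (1 + z)"
proof (cases "z \<ge> 0")
  case True
  then have "z - z\<^sup>2 \<le> ln (1 + z)"
    using assms by (intro ln_one_plus_pos_lower_bound) auto
  then show ?thesis
    using zero_le_power2[of z] by linarith
next
  case False
  then have "- (-z) - 2 * (-z)\<^sup>2 \<le> ln (1 - (-z))"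
    using assms by (intro ln_one_minus_pos_lower_bound) auto
  then show ?thesis by simp
qed

text \<open>First-order condition: if \<open>t \<mapsto> \<Sum> c ln (1 + t (y - 1))\<close> is maximal at \<open>t = 0\<close>, its
  derivative \<open>\<Sum> c (y - 1)\<close> there is nonpositive.\<close>

lemma sum_le_of_ln_perturbation_nonpos:
  fixes c y :: "'b \<Rightarrow> real"
  assumes fin: "finite S" and c: "\<And>g. g \<in> S \<Longrightarrow> c g \<ge> 0" and y: "\<And>g. g \<in> S \<Longrightarrow> y g \<ge> 0"
    and H: "\<And>t. 0 < t \<Longrightarrow> t \<le> 1/2 \<Longrightarrow> (\<Sum>g\<in>S. c g * ln (1 + t * (y g - 1))) \<le> 0"
  shows "(\<Sum>g\<in>S. c g * y g) \<le> (\<Sum>g\<in>S. c g)"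
proof (rule ccontr)
  assume neg: "\<not> ?thesis"
  define a where "a = (\<Sum>g\<in>S. c g * (y g - 1))"
  define b where "b = (\<Sum>g\<in>S. c g * (y g - 1)\<^sup>2)"
  define Y where "Y = (\<Sum>g\<in>S. y g + 1)"
  define t where "t = min (1 / (2 * Y + 2)) (min (1/2) (a / (4 * b + 1)))"
  have a: "a > 0"
    using neg unfolding a_def by (simp add: algebra_simps sum_subtractf)
  have b: "b \<ge> 0"
    unfolding b_def using c by (intro sum_nonneg) auto
  have Y: "Y \<ge> 0"
    unfolding Y_def using y by (intro sum_nonneg) (simp add: add_nonneg_nonneg)
  have yY: "\<bar>y g - 1\<bar> \<le> Y" if "g \<in> S" for g
  proof -
    have "y g + 1 \<le> Y"
      unfolding Y_def using fin that y by (intro member_le_sum) (simp_all add: add_nonneg_nonneg)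
    then show ?thesis
      using y[OF that] by (simp add: abs_le_iff)
  qed
  have t: "t > 0" "t \<le> 1/2" "t \<le> 1 / (2 * Y + 2)" "t \<le> a / (4 * b + 1)"
    unfolding t_def using Y a b by (simp, meson min.cobounded1 min.cobounded2 order.trans,
      meson min.cobounded1 min.cobounded2 order.trans, meson min.cobounded2 order.trans)
  have "\<bar>t * (y g - 1)\<bar> \<le> 1/2" if "g \<in> S" for g
  proof -
    have "\<bar>t * (y g - 1)\<bar> = t * \<bar>y g - 1\<bar>"
      using t(1) by (simp add: abs_mult)
    also have "\<dots> \<le> (1 / (2 * Y + 2)) * (Y + 1)"
      using yY[OF that] t Y by (intro mult_mono) auto
    also have "\<dots> = 1/2"
      using Y by (simp add: field_simps)
    finally show ?thesis .
  qed
  then have "(\<Sum>g\<in>S. c g * (t * (y g - 1) - 2 * (t * (y g - 1))\<^sup>2))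
      \<le> (\<Sum>g\<in>S. c g * ln (1 + t * (y g - 1)))"
    using c by (intro sum_mono mult_left_mono ln_one_plus_ge_quadratic) auto
  then have "(\<Sum>g\<in>S. c g * (t * (y g - 1) - 2 * (t * (y g - 1))\<^sup>2)) \<le> 0"
    using H[OF t(1,2)] by linarith
  moreover have "(\<Sum>g\<in>S. c g * (t * (y g - 1) - 2 * (t * (y g - 1))\<^sup>2)) = t * a - 2 * t\<^sup>2 * b"
  proof -
    have "c g * (t * (y g - 1) - 2 * (t * (y g - 1))\<^sup>2)
        = t * (c g * (y g - 1)) - 2 * t\<^sup>2 * (c g * (y g - 1)\<^sup>2)" for g
      by (simp add: algebra_simps power2_eq_square)
    then show ?thesis
      unfolding a_def b_def by (simp add: sum_subtractf sum_distrib_left)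
  qed
  ultimately have "t * a \<le> 2 * t\<^sup>2 * b"
    by simp
  then have "a \<le> 2 * t * b"
    using t(1) by (simp add: power2_eq_square field_simps)
  also have "\<dots> \<le> 2 * (a / (4 * b + 1)) * b"
    using t(4) b by (intro mult_right_mono) auto
  also have "\<dots> < a"
    using a b by (simp add: field_simps add_pos_nonneg)
  finally show False by simp
qed

lemma finite_bounded_convergent_subseq:
  fixes v :: "nat \<Rightarrow> 'b \<Rightarrow> real"
  assumes "finite S" "\<And>j g. g \<in> S \<Longrightarrow> \<bar>v j g\<bar> \<le> B g"
  shows "\<exists>r. strict_mono r \<and> (\<forall>g\<in>S. convergent (\<lambda>j. v (r j) g))"
  using assms
proof (induction S rule: finite_induct)
  case empty
  show ?case by (intro exI[of _ id]) (auto simp: strict_mono_def)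
next
  case (insert a S)
  obtain r where r: "strict_mono r" "\<forall>g\<in>S. convergent (\<lambda>j. v (r j) g)"
    using insert by auto
  have "bounded (range (\<lambda>j. v (r j) a))"
    unfolding bounded_iff using insert.prems[of a] by (intro exI[of _ "B a"]) auto
  then obtain l r' where r': "strict_mono r'" "((\<lambda>j. v (r j) a) \<circ> r') \<longlonglongrightarrow> l"
    using bounded_imp_convergent_subsequence by blast
  have "convergent (\<lambda>j. v ((r \<circ> r') j) g)" if "g \<in> insert a S" for g
    using r(2) r' that convergent_subseq_convergent[of "\<lambda>j. v (r j) g" r']
    by (auto simp: convergent_def o_def)
  then show ?case
    using strict_mono_o[OF r(1) r'(1)] by blast
qed

lemma ereal_divide_minus:
  fixes x :: ereal
  assumes "x \<noteq> \<infinity>" "n > 0"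
  shows "(x - ereal (n * r)) / ereal n = x / ereal n - ereal r"
  using assms by (cases x) (auto simp: ereal_divide field_simps)

lemma tendsto_affine_div_Suc:
  fixes p q c :: real
  shows "(\<lambda>k. (p + real k * q) / (c * real (Suc k))) \<longlonglongrightarrow> q / c"
proof -
  have "(p + real k * q) / (c * real (Suc k)) = ((p - q) / c) / real (Suc k) + q / c" for k
  proof (cases "c = 0")
    case False
    have "((p - q) / c) / real (Suc k) + q / c = ((p - q) + q * real (Suc k)) / (c * real (Suc k))"
      using False by (simp add: add_divide_distrib divide_divide_eq_left mult.commute)
    also have "(p - q) + q * real (Suc k) = p + real k * q"
      by (simp add: algebra_simps)
    finally show ?thesis
      by simp
  qed simp
  moreover have "(\<lambda>k. ((p - q) / c) / real (Suc k) + q / c) \<longlonglongrightarrow> 0 + q / c"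
    by (intro tendsto_add tendsto_const LIMSEQ_Suc[OF lim_const_over_n])
  ultimately show ?thesis
    by simp
qed

lemma ereal_le_eln_of_geometric_bound:
  fixes L :: ereal and a :: "nat \<Rightarrow> real"
  assumes n: "n \<ge> 1" and N: "N \<ge> 0"
    and L: "\<And>k. L \<le> eln (a k) / ereal (real (n * Suc k))"
    and a: "\<And>k. a k \<le> C * N ^ k"
  shows "L \<le> eln N / ereal (real n)"
proof (cases "N = 0")
  case True
  then have "eln (a 1) = -\<infinity>"
    using a[of 1] by (simp add: eln_nonpos)
  then have "L = -\<infinity>"
    using L[of 1] n by (simp add: ereal_divide)
  then show ?thesis
    by simp
next
  case False
  with N have N_pos: "N > 0"
    by simp
  define b where "b k = (ln (\<bar>C\<bar> + 1) + real k * ln N) / (real n * real (Suc k))" for k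
  have L_b: "L \<le> ereal (b k)" for k
  proof -
    have "eln (a k) \<le> ereal (ln (\<bar>C\<bar> + 1) + real k * ln N)"
    proof (cases "a k > 0")
      case True
      have "a k \<le> (\<bar>C\<bar> + 1) * N ^ k"
        using a[of k] N_pos by (smt (verit) mult_right_mono zero_le_power)
      then have "ln (a k) \<le> ln ((\<bar>C\<bar> + 1) * N ^ k)"
        using True by simp
      also have "\<dots> = ln (\<bar>C\<bar> + 1) + real k * ln N"
        using N_pos by (simp add: ln_mult ln_realpow)
      finally show ?thesis
        using True by (simp add: eln_pos)
    next
      case False
      then show ?thesis by (simp add: eln_nonpos)
    qed
    then have "eln (a k) / ereal (real (n * Suc k))
        \<le> ereal (ln (\<bar>C\<bar> + 1) + real k * ln N) / ereal (real (n * Suc k))"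
      using n by (intro ereal_divide_right_mono) (auto intro: add_pos_nonneg)
    also have "\<dots> = ereal (b k)"
    proof -
      have "real (n * Suc k) = real n * real (Suc k)" "real n * real (Suc k) \<noteq> 0"
        using n by (simp_all only: of_nat_mult) simp
      then show ?thesis
        unfolding b_def by (simp only: ereal_divide) simp
    qed
    finally show ?thesis
      using L[of k] by simp
  qed
  have b_lim: "b \<longlonglongrightarrow> ln N / real n"
    unfolding b_def[abs_def] by (rule tendsto_affine_div_Suc)
  show ?thesis
  proof (cases L)
    case (real l)
    then have "l \<le> ln N / real n"
      using L_b by (intro LIMSEQ_le_const[OF b_lim]) auto
    then show ?thesis
      using real N_pos n by (simp add: eln_pos ereal_divide)
  next
    case PInf
    then show ?thesis using L_b[of 0] by simp
  qed simp
qed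

section \<open>Partitions of unity\<close>

lemma partition_of_unityD:
  assumes "partition_of_unity D"
  shows "finite D" "\<And>g. g \<in> D \<Longrightarrow> g \<in> CX" "\<And>g x. g \<in> D \<Longrightarrow> 0 \<le> g x"
    "\<And>x. (\<Sum>g\<in>D. g x) = 1"
  using assms unfolding partition_of_unity_def by auto

lemma states_partition_sum:
  assumes "m \<in> states" "partition_of_unity D"
  shows "(\<Sum>g\<in>D. m g) = 1"
proof -
  have "m (\<lambda>x. \<Sum>g\<in>D. 1 * g x) = (\<Sum>g\<in>D. 1 * m g)"
    using partition_of_unityD(1,2)[OF assms(2)] by (intro states_linear_combination[OF assms(1)]) auto
  then show ?thesis
    using states_const[OF assms(1), of 1] partition_of_unityD(4)[OF assms(2)] by simp
qed

lemma partition_sum_le: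
  assumes "partition_of_unity D" "\<And>g. g \<in> D \<Longrightarrow> g x > 0 \<Longrightarrow> a g \<le> b"
  shows "(\<Sum>g\<in>D. a g * g x) \<le> b"
proof -
  have "(\<Sum>g\<in>D. a g * g x) \<le> (\<Sum>g\<in>D. b * g x)"
    using assms partition_of_unityD(3)[OF assms(1)]
    by (intro sum_mono) (metis less_eq_real_def mult_right_mono mult_zero_right)
  also have "\<dots> = b"
    using partition_of_unityD(4)[OF assms(1)] by (simp add: sum_distrib_left[symmetric])
  finally show ?thesis .
qed

lemma partition_sum_ge:
  assumes "partition_of_unity D" "\<And>g. g \<in> D \<Longrightarrow> g x > 0 \<Longrightarrow> b \<le> a g"
  shows "b \<le> (\<Sum>g\<in>D. a g * g x)"
  using partition_sum_le[OF assms(1), of x "\<lambda>g. - a g" "- b"] assms(2)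
  by (simp add: sum_negf)

lemma states_le_partition_sum:
  assumes \<mu>: "\<mu> \<in> states" and \<psi>: "\<psi> \<in> CX" and D: "partition_of_unity D"
    and s: "\<And>g x. g \<in> D \<Longrightarrow> g x > 0 \<Longrightarrow> \<bar>\<psi> x - s g\<bar> \<le> d"
  shows "\<mu> \<psi> - d \<le> (\<Sum>g\<in>D. \<mu> g * s g)"
proof -
  note D_facts = partition_of_unityD[OF D]
  have "\<mu> \<psi> - d = \<mu> (\<lambda>x. \<psi> x - d)"
    using states_diff[OF \<mu> \<psi> CX_const] states_const[OF \<mu>] by simp
  also have "\<dots> \<le> \<mu> (\<lambda>x. \<Sum>g\<in>D. s g * g x)"
  proof (rule states_mono[OF \<mu>])
    show "(\<lambda>x. \<Sum>g\<in>D. s g * g x) \<in> CX"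
      using D_facts(2) by (intro CX_sum CX_scale)
    show "\<psi> x - d \<le> (\<Sum>g\<in>D. s g * g x)" for x
      using s by (intro partition_sum_ge[OF D]) (fastforce simp: abs_le_iff)
  qed (use \<psi> in auto)
  also have "\<dots> = (\<Sum>g\<in>D. s g * \<mu> g)"
    by (rule states_linear_combination[where f = "\<lambda>g. g", OF \<mu> D_facts(1,2)])
  finally show ?thesis
    by (simp add: mult.commute)
qed

lemma merge_duplicates:
  fixes Q :: "('a \<Rightarrow> real) \<Rightarrow> bool"
  assumes double: "\<And>f. Q f \<Longrightarrow> Q (\<lambda>x. f x + f x)"
  shows "(\<forall>f\<in>set L. Q f) \<Longrightarrow> \<exists>L'. distinct L' \<and> length L' \<le> length L \<and> (\<forall>f\<in>set L'. Q f) \<and>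
    (\<forall>x. sum_list (map (\<lambda>f. f x) L') = sum_list (map (\<lambda>f. f x) L))"
proof (induction "length L" arbitrary: L rule: less_induct)
  case less
  show ?case
  proof (cases L)
    case Nil
    then show ?thesis by auto
  next
    case (Cons f L0)
    then obtain L1 where L1: "distinct L1" "length L1 \<le> length L0" "\<forall>f\<in>set L1. Q f"
      "\<forall>x. sum_list (map (\<lambda>f. f x) L1) = sum_list (map (\<lambda>f. f x) L0)"
      using less by force
    have Qf: "Q f"
      using less.prems Cons by simp
    show ?thesis
    proof (cases "f \<in> set L1")
      case False
      then show ?thesis
        using L1 Qf Cons by (intro exI[of _ "f # L1"]) auto
    next
      case True
      define L2 where "L2 = (\<lambda>x. f x + f x) # remove1 f L1"
      have "length L1 > 0"
        using True by (cases L1) auto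
      then have shorter: "length L2 < length L"
        using True L1(2) Cons unfolding L2_def by (simp add: length_remove1)
      have "\<forall>g\<in>set L2. Q g"
        unfolding L2_def using L1(3) double[OF Qf] set_remove1_subset[of f L1] by auto
      then obtain L3 where L3: "distinct L3" "length L3 \<le> length L2" "\<forall>f\<in>set L3. Q f"
        "\<forall>x. sum_list (map (\<lambda>f. f x) L3) = sum_list (map (\<lambda>f. f x) L2)"
        using less(1)[OF shorter] by blast
      have "sum_list (map (\<lambda>f. f x) L2) = sum_list (map (\<lambda>f. f x) L)" for x
        using sum_list_map_remove1[OF True, of "\<lambda>f. f x"] L1(4) Cons unfolding L2_def by simp
      then show ?thesis
        using L3 shorter by (intro exI[of _ L3]) auto
    qed
  qed
qed

definition ramp :: "real \<Rightarrow> real \<Rightarrow> nat \<Rightarrow> real \<Rightarrow> real" where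
  "ramp a d j t = min 1 (max 0 ((t - a) / d - real j))"

lemma continuous_on_ramp: "continuous_on UNIV (ramp a d j)"
  unfolding ramp_def[abs_def] divide_inverse by (intro continuous_intros)

lemma ramp_Suc_le: "d > 0 \<Longrightarrow> ramp a d (Suc j) t \<le> ramp a d j t"
  unfolding ramp_def by (auto simp: min_def max_def)

lemma ramp_Suc_less_imp_near:
  assumes "d > 0" "ramp a d (Suc j) t < ramp a d j t"
  shows "\<bar>t - (a + (real j + 1) * d)\<bar> \<le> d"
proof -
  have "0 < (t - a) / d - j" "(t - a) / d - j < 2"
    using assms unfolding ramp_def by (auto simp: min_def max_def split: if_splits)
  then have "j * d < t - a" "t - a < (j + 2) * d"
    using assms(1) by (auto simp: field_simps)
  then show ?thesis
    by (auto simp: abs_if algebra_simps)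
qed

lemma ramp_telescope:
  assumes "d > 0" "a + d \<le> t" "t \<le> a + real M * d"
  shows "(\<Sum>j<M. ramp a d j t - ramp a d (Suc j) t) = 1"
proof -
  have "(\<Sum>j<M. ramp a d j t - ramp a d (Suc j) t) = ramp a d 0 t - ramp a d M t"
    by (rule sum_lessThan_telescope')
  moreover have "ramp a d 0 t = 1" "ramp a d M t = 0"
    using assms unfolding ramp_def by (simp_all add: field_simps)
  ultimately show ?thesis
    by simp
qed

lemma partition_of_unity_small_oscillation:
  fixes \<psi> :: "'a::topological_space \<Rightarrow> real"
  assumes compact: "compact (UNIV :: 'a set)" and \<psi>: "\<psi> \<in> CX" and d: "d > 0"
  shows "\<exists>D. partition_of_unity D \<and> (\<forall>g\<in>D. \<exists>s. \<forall>x. g x > 0 \<longrightarrow> \<bar>\<psi> x - s\<bar> \<le> d)"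
proof -
  obtain B where B: "\<And>x. \<bar>\<psi> x\<bar> \<le> B"
    using CX_bounded[OF compact \<psi>] by auto
  define a where "a = - B - d"
  define M where "M = nat (ceiling ((2 * B + d) / d))"
  define g where "g j x = ramp a d j (\<psi> x) - ramp a d (Suc j) (\<psi> x)" for j x
  define Q where "Q f \<longleftrightarrow> f \<in> CX \<and> (\<forall>x. 0 \<le> f x) \<and> (\<exists>s. \<forall>x. f x > 0 \<longrightarrow> \<bar>\<psi> x - s\<bar> \<le> d)"
    for f
  have Q_g: "Q (g j)" for j
  proof -
    have "g j \<in> CX"
      using CX_diff[OF CX_compose_real[OF \<psi> continuous_on_ramp] CX_compose_real[OF \<psi> continuous_on_ramp]]
      unfolding g_def[abs_def] .
    moreover have "\<forall>x. 0 \<le> g j x"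
      unfolding g_def using ramp_Suc_le[OF d] by simp
    moreover have "\<forall>x. g j x > 0 \<longrightarrow> \<bar>\<psi> x - (a + (real j + 1) * d)\<bar> \<le> d"
      unfolding g_def using ramp_Suc_less_imp_near[OF d] by simp
    ultimately show ?thesis
      unfolding Q_def by blast
  qed
  have sum_g: "(\<Sum>j<M. g j x) = 1" for x
  proof -
    have "(2 * B + d) / d \<le> real M"
      unfolding M_def by linarith
    then have "\<psi> x \<le> a + real M * d"
      using B[of x] d unfolding a_def by (simp add: field_simps abs_le_iff)
    moreover have "a + d \<le> \<psi> x"
      using B[of x] unfolding a_def by (simp add: abs_le_iff)
    ultimately show ?thesis
      unfolding g_def using ramp_telescope[OF d] by blast
  qed
  text \<open>A partition of unity is a set, so coinciding \<open>g j\<close> must be merged first.\<close>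
  obtain L where L: "distinct L" "\<forall>f\<in>set L. Q f"
    "\<forall>x. sum_list (map (\<lambda>f. f x) L) = sum_list (map (\<lambda>f. f x) (map g [0..<M]))"
  proof -
    have "Q (\<lambda>x. f x + f x)" if "Q f" for f
      using that unfolding Q_def by (auto simp: add_pos_pos)
    then show ?thesis
      using that merge_duplicates[of Q "map g [0..<M]"] Q_g by auto
  qed
  have "(\<Sum>f\<in>set L. f x) = 1" for x
    using sum_list_distinct_conv_sum_set[OF L(1), of "\<lambda>f. f x"] L(3) sum_g[of x]
    by (simp add: o_def sum_list_sum_nth atLeast0LessThan)
  then show ?thesis
    using L(2) unfolding partition_of_unity_def Q_def by (intro exI[of _ "set L"]) auto
qed

lemma partition_weighted_sum_pos:
  assumes D: "partition_of_unity D" and w: "\<And>g. g \<in> D \<Longrightarrow> w g > 0"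
  shows "0 < (\<Sum>g\<in>D. w g * g x)"
proof -
  obtain g where "g \<in> D" "g x > 0"
    using partition_of_unityD(4)[OF D, of x] by (metis less_numeral_extra(1) sum_nonpos not_le)
  moreover have "0 \<le> w h * h x" if "h \<in> D" for h
    using partition_of_unityD(3)[OF D that] w[OF that] by simp
  ultimately show ?thesis
    using partition_of_unityD(1)[OF D] w by (intro sum_pos2[of _ g]) auto
qed

lemma states_ln_partition_ge:
  assumes \<mu>: "\<mu> \<in> states" and D: "partition_of_unity D" and w: "\<And>g. g \<in> D \<Longrightarrow> w g > 0"
  shows "(\<Sum>g\<in>D. \<mu> g * ln (w g)) \<le> \<mu> (\<lambda>x. ln (\<Sum>g\<in>D. w g * g x))"
proof -
  note D_facts = partition_of_unityD[OF D]
  have "(\<Sum>g\<in>D. \<mu> g * ln (w g)) = (\<Sum>g\<in>D. ln (w g) * \<mu> g)"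
    by (rule sum.cong[OF refl mult.commute])
  also have "\<dots> = \<mu> (\<lambda>x. \<Sum>g\<in>D. ln (w g) * g x)"
    by (rule states_linear_combination[where f = "\<lambda>g. g", OF \<mu> D_facts(1,2), symmetric])
  also have "\<dots> \<le> \<mu> (\<lambda>x. ln (\<Sum>g\<in>D. w g * g x))"
  proof (rule states_mono[OF \<mu>])
    show "(\<lambda>x. \<Sum>g\<in>D. ln (w g) * g x) \<in> CX"
      using D_facts(2) by (intro CX_sum CX_scale)
    show "(\<lambda>x. ln (\<Sum>g\<in>D. w g * g x)) \<in> CX"
      using D_facts(2) partition_weighted_sum_pos[OF D w] by (intro CX_ln CX_sum CX_scale)
    show "(\<Sum>g\<in>D. ln (w g) * g x) \<le> ln (\<Sum>g\<in>D. w g * g x)" for x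
      using sum_mult_ln_le_ln_sum[of D "\<lambda>g. g x" w] D_facts w by (simp add: mult.commute)
  qed
  finally show ?thesis .
qed

section \<open>The entropy sum\<close>

lemma sum_ereal_MInf:
  fixes t :: "'b \<Rightarrow> ereal"
  assumes "finite D" "g0 \<in> D" "t g0 = -\<infinity>" "\<And>g. g \<in> D \<Longrightarrow> t g \<noteq> \<infinity>"
  shows "(\<Sum>g\<in>D. t g) = -\<infinity>"
proof -
  have "(\<Sum>g\<in>D. t g) = t g0 + (\<Sum>g\<in>D - {g0}. t g)"
    using assms by (simp add: sum.remove)
  moreover have "(\<Sum>g\<in>D - {g0}. t g) \<noteq> \<infinity>"
    using assms by (auto simp: sum_Pinfty)
  ultimately show ?thesis
    using assms(3) by simp
qed

text \<open>The summand of \<open>\<tau>\<^sub>n(\<mu>, D)\<close> is \<open>c ln (x / c)\<close> with \<open>c = \<mu>[g]\<close> and \<open>x = m[A\<^sup>n g]\<close>.\<close>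

lemma entropy_sum_eq:
  fixes c x :: "'b \<Rightarrow> real"
  assumes D: "finite D" and c: "\<And>g. g \<in> D \<Longrightarrow> c g \<ge> 0"
  defines "S \<equiv> {g\<in>D. c g \<noteq> 0}"
  shows "(\<Sum>g\<in>D. (if c g = 0 then 0 else ereal (c g) * eln (x g / c g))) =
    (if \<forall>g\<in>S. x g > 0 then ereal (\<Sum>g\<in>S. c g * ln (x g / c g)) else -\<infinity>)"
proof -
  define t where "t g = (if c g = 0 then 0 else ereal (c g) * eln (x g / c g))" for g
  have c_pos: "c g > 0" if "g \<in> S" for g
    using that c unfolding S_def by force
  show ?thesis
  proof (cases "\<forall>g\<in>S. x g > 0")
    case True
    have "(\<Sum>g\<in>D. t g) = (\<Sum>g\<in>S. t g)"
      unfolding S_def using D by (intro sum.mono_neutral_right) (auto simp: t_def)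
    also have "\<dots> = (\<Sum>g\<in>S. ereal (c g * ln (x g / c g)))"
      using c_pos True unfolding t_def by (intro sum.cong refl) (auto simp: eln_def)
    also have "\<dots> = ereal (\<Sum>g\<in>S. c g * ln (x g / c g))"
      by (rule sum_ereal)
    finally show ?thesis
      using True unfolding t_def by simp
  next
    case False
    then obtain g0 where g0: "g0 \<in> S" "x g0 \<le> 0"
      by (auto simp: not_less)
    then have "t g0 = -\<infinity>"
      using c_pos[OF g0(1)] unfolding t_def S_def by (simp add: eln_def divide_nonpos_pos not_less)
    moreover have "t g \<noteq> \<infinity>" if "g \<in> D" for g
      using c[OF that] unfolding t_def by (auto simp: eln_def)
    ultimately have "(\<Sum>g\<in>D. t g) = -\<infinity>"
      using g0(1) D unfolding S_def by (intro sum_ereal_MInf) auto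
    then show ?thesis
      using False unfolding t_def by simp
  qed
qed

lemma tendsto_entropy_sum:
  fixes w :: "nat \<Rightarrow> 'b \<Rightarrow> real"
  assumes "\<And>g. g \<in> S \<Longrightarrow> (\<lambda>j. w j g) \<longlonglongrightarrow> v g" "\<And>g. g \<in> S \<Longrightarrow> v g > 0"
    "\<And>g. g \<in> S \<Longrightarrow> c g > 0"
  shows "(\<lambda>j. \<Sum>g\<in>S. c g * ln (w j g / c g)) \<longlonglongrightarrow> (\<Sum>g\<in>S. c g * ln (v g / c g))"
proof (intro tendsto_sum tendsto_mult tendsto_const tendsto_ln tendsto_divide)
  fix g
  assume "g \<in> S"
  then show "(\<lambda>j. w j g) \<longlonglongrightarrow> v g" "c g \<noteq> 0" "v g / c g \<noteq> 0"
    using assms(1-3)[of g] by auto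
qed

lemma entropy_sum_le_of_tendsto:
  fixes w :: "nat \<Rightarrow> 'b \<Rightarrow> real"
  assumes "\<And>g. g \<in> S \<Longrightarrow> (\<lambda>j. w j g) \<longlonglongrightarrow> v g" "\<And>g. g \<in> S \<Longrightarrow> v g > 0"
    "\<And>g. g \<in> S \<Longrightarrow> c g > 0" "\<And>j. (\<Sum>g\<in>S. c g * ln (w j g / c g)) \<le> T"
  shows "(\<Sum>g\<in>S. c g * ln (v g / c g)) \<le> T"
  using assms(4) by (intro LIMSEQ_le_const2[OF tendsto_entropy_sum[OF assms(1-3)]]) auto

lemma entropy_sum_component_lower_bound:
  fixes c v H :: "'b \<Rightarrow> real"
  assumes S: "finite S" "g \<in> S" and c: "\<And>g. g \<in> S \<Longrightarrow> c g > 0"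
    and v: "\<And>g. g \<in> S \<Longrightarrow> 0 < v g" "\<And>g. g \<in> S \<Longrightarrow> v g \<le> H g"
    and T: "T \<le> (\<Sum>g\<in>S. c g * ln (v g / c g))"
  shows "c g * exp ((T - (\<Sum>h\<in>S - {g}. c h * ln (H h / c h))) / c g) \<le> v g"
proof -
  have "c h * ln (v h / c h) \<le> c h * ln (H h / c h)" if "h \<in> S" for h
  proof -
    have "0 < v h / c h" "v h / c h \<le> H h / c h"
      using c[OF that] v[OF that] by (auto intro: divide_right_mono)
    then show ?thesis
      using c[OF that] by (intro mult_left_mono) auto
  qed
  then have "(\<Sum>h\<in>S - {g}. c h * ln (v h / c h)) \<le> (\<Sum>h\<in>S - {g}. c h * ln (H h / c h))"
    by (intro sum_mono) auto
  then have "T - (\<Sum>h\<in>S - {g}. c h * ln (H h / c h)) \<le> c g * ln (v g / c g)"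
    using T S by (simp add: sum.remove)
  then have "(T - (\<Sum>h\<in>S - {g}. c h * ln (H h / c h))) / c g \<le> ln (v g / c g)"
    using c[OF S(2)] by (simp add: field_simps)
  then have "exp ((T - (\<Sum>h\<in>S - {g}. c h * ln (H h / c h))) / c g) \<le> v g / c g"
    using c[OF S(2)] v(1)[OF S(2)] by (metis divide_pos_pos exp_le_cancel_iff exp_ln)
  then show ?thesis
    using c[OF S(2)] by (simp add: field_simps)
qed

lemma entropy_sum_convergent_subseq:
  fixes v :: "nat \<Rightarrow> 'b \<Rightarrow> real"
  assumes S: "finite S" and c: "\<And>g. g \<in> S \<Longrightarrow> c g > 0"
    and v: "\<And>j g. g \<in> S \<Longrightarrow> 0 < v j g" "\<And>j g. g \<in> S \<Longrightarrow> v j g \<le> H g"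
    and T: "\<And>j. T \<le> (\<Sum>g\<in>S. c g * ln (v j g / c g))"
  obtains r vs where "strict_mono r" "\<And>g. g \<in> S \<Longrightarrow> (\<lambda>j. v (r j) g) \<longlonglongrightarrow> vs g"
    "\<And>g. g \<in> S \<Longrightarrow> vs g > 0"
proof -
  define \<delta> where "\<delta> g = c g * exp ((T - (\<Sum>h\<in>S - {g}. c h * ln (H h / c h))) / c g)" for g
  have \<delta>: "0 < \<delta> g" "\<delta> g \<le> v j g" if "g \<in> S" for g j
    unfolding \<delta>_def using c[OF that] entropy_sum_component_lower_bound[OF S that c v T] by auto
  have "\<bar>v j g\<bar> \<le> H g" if "g \<in> S" for j g
    using v(1)[of g j] v(2)[of g j] that by simp
  then obtain r where r: "strict_mono r" "\<forall>g\<in>S. convergent (\<lambda>j. v (r j) g)"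
    using finite_bounded_convergent_subseq[OF S] by blast
  define vs where "vs g = lim (\<lambda>j. v (r j) g)" for g
  have vs_lim: "(\<lambda>j. v (r j) g) \<longlonglongrightarrow> vs g" if "g \<in> S" for g
    using r(2) that unfolding vs_def convergent_LIMSEQ_iff by blast
  have "vs g > 0" if "g \<in> S" for g
    using \<delta>[OF that] by (intro less_le_trans[OF _ LIMSEQ_le_const[OF vs_lim[OF that]]]) auto
  with r(1) vs_lim show ?thesis
    using that by blast
qed

text \<open>Maximizers of the concave function \<open>\<Sum> c ln (v / c)\<close> over a bounded convex set of
  positive vectors exist in its closure, by compactness and because the function tends to
  \<open>-\<infinity>\<close> at the boundary.\<close>

lemma entropy_maximizer:
  fixes S :: "'b set" and c H :: "'b \<Rightarrow> real" and V :: "('b \<Rightarrow> real) set"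
  defines "f \<equiv> \<lambda>v. \<Sum>g\<in>S. c g * ln (v g / c g)"
  assumes S: "finite S" and c: "\<And>g. g \<in> S \<Longrightarrow> c g > 0"
    and V_bounded: "\<And>v g. v \<in> V \<Longrightarrow> g \<in> S \<Longrightarrow> 0 \<le> v g \<and> v g \<le> H g"
    and V_convex: "\<And>v w t. v \<in> V \<Longrightarrow> w \<in> V \<Longrightarrow> 0 \<le> t \<Longrightarrow> t \<le> 1 \<Longrightarrow>
      (\<lambda>g. (1 - t) * v g + t * w g) \<in> V"
    and le_T: "\<And>v. v \<in> V \<Longrightarrow> (\<forall>g\<in>S. v g > 0) \<Longrightarrow> f v \<le> T"
    and approx: "\<And>e. e > 0 \<Longrightarrow> \<exists>v\<in>V. (\<forall>g\<in>S. v g > 0) \<and> T - e < f v"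
  obtains vs where "\<And>g. g \<in> S \<Longrightarrow> vs g > 0" "f vs = T"
    "\<And>w t. w \<in> V \<Longrightarrow> 0 < t \<Longrightarrow> t < 1 \<Longrightarrow> f (\<lambda>g. (1 - t) * vs g + t * w g) \<le> T"
proof -
  have "\<forall>j. \<exists>v\<in>V. (\<forall>g\<in>S. v g > 0) \<and> T - inverse (real (Suc j)) < f v"
    using approx by simp
  then obtain v where v: "\<And>j. v j \<in> V" "\<And>j g. g \<in> S \<Longrightarrow> v j g > 0"
    and f_v: "\<And>j. T - inverse (real (Suc j)) < f (v j)"
    by metis
  have v_le: "v j g \<le> H g" if "g \<in> S" for j g
    using V_bounded[OF v(1) that] by simp
  have T_le: "T - 1 \<le> f (v j)" for j
  proof -
    have "inverse (real (Suc j)) \<le> 1"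
      by (simp add: inverse_le_1_iff)
    then show ?thesis
      using f_v[of j] by linarith
  qed
  obtain r vs where r: "strict_mono r" and vs_lim: "\<And>g. g \<in> S \<Longrightarrow> (\<lambda>j. v (r j) g) \<longlonglongrightarrow> vs g"
    and vs_pos: "\<And>g. g \<in> S \<Longrightarrow> vs g > 0"
    using entropy_sum_convergent_subseq[where v = v, OF S c v(2) v_le T_le[unfolded f_def]] by blast
  have "f vs \<le> T"
    unfolding f_def
  proof (rule entropy_sum_le_of_tendsto[of S "\<lambda>j. v (r j)"])
    show "(\<Sum>g\<in>S. c g * ln (v (r j) g / c g)) \<le> T" for j
      using le_T[OF v(1)] v(2) unfolding f_def by blast
  qed (use vs_lim vs_pos c in auto)
  moreover have "T \<le> f vs"
  proof (rule LIMSEQ_le)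
    have "(\<lambda>j. inverse (real (Suc (r j)))) \<longlonglongrightarrow> 0"
      using LIMSEQ_subseq_LIMSEQ[OF LIMSEQ_inverse_real_of_nat r] by (simp add: o_def)
    then show "(\<lambda>j. T - inverse (real (Suc (r j)))) \<longlonglongrightarrow> T"
      using tendsto_diff[OF tendsto_const, of _ 0 sequentially T] by simp
    show "(\<lambda>j. f (v (r j))) \<longlonglongrightarrow> f vs"
      unfolding f_def using vs_lim vs_pos c by (intro tendsto_entropy_sum)
    show "\<exists>N. \<forall>j\<ge>N. T - inverse (real (Suc (r j))) \<le> f (v (r j))"
      using f_v less_imp_le by blast
  qed
  ultimately have "f vs = T"
    by (rule antisym)
  moreover have "f (\<lambda>g. (1 - t) * vs g + t * w g) \<le> T" if "w \<in> V" "0 < t" "t < 1" for w t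
  proof -
    have "(\<lambda>g. (1 - t) * v (r j) g + t * w g) \<in> V" for j
      using that by (intro V_convex v) auto
    moreover have "0 < (1 - t) * v (r j) g + t * w g" if "g \<in> S" for g j
      using v(2)[OF that] V_bounded[OF \<open>w \<in> V\<close> that] \<open>0 < t\<close> \<open>t < 1\<close>
      by (intro add_pos_nonneg) auto
    ultimately have le: "f (\<lambda>g. (1 - t) * v (r j) g + t * w g) \<le> T" for j
      using le_T by blast
    have lim: "(\<lambda>j. (1 - t) * v (r j) g + t * w g) \<longlonglongrightarrow> (1 - t) * vs g + t * w g" if "g \<in> S" for g
      using vs_lim[OF that] by (intro tendsto_intros)
    have pos: "0 < (1 - t) * vs g + t * w g" if "g \<in> S" for g
      using vs_pos[OF that] V_bounded[OF \<open>w \<in> V\<close> that] \<open>0 < t\<close> \<open>t < 1\<close>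
      by (intro add_pos_nonneg) auto
    from entropy_sum_le_of_tendsto[OF lim pos c le[unfolded f_def]] show ?thesis
      unfolding f_def by simp
  qed
  ultimately show ?thesis
    using that vs_pos by blast
qed

lemma entropy_maximizer_first_order:
  fixes c vs w :: "'b \<Rightarrow> real"
  assumes S: "finite S" and c: "\<And>g. g \<in> S \<Longrightarrow> c g > 0"
    and vs: "\<And>g. g \<in> S \<Longrightarrow> vs g > 0" and w: "\<And>g. g \<in> S \<Longrightarrow> w g \<ge> 0"
    and max: "\<And>t. 0 < t \<Longrightarrow> t < 1 \<Longrightarrow> (\<Sum>g\<in>S. c g * ln (((1 - t) * vs g + t * w g) / c g))
      \<le> (\<Sum>g\<in>S. c g * ln (vs g / c g))"
  shows "(\<Sum>g\<in>S. c g * (w g / vs g)) \<le> (\<Sum>g\<in>S. c g)"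
proof (rule sum_le_of_ln_perturbation_nonpos[OF S])
  fix t :: real
  assume t: "0 < t" "t \<le> 1/2"
  have "c g * ln (((1 - t) * vs g + t * w g) / c g) - c g * ln (vs g / c g)
      = c g * ln (1 + t * (w g / vs g - 1))" if "g \<in> S" for g
  proof -
    have pos: "0 < 1 + t * (w g / vs g - 1)"
    proof -
      have "0 \<le> t * (w g / vs g)"
        using vs[OF that] w[OF that] t by simp
      moreover have "1 + t * (w g / vs g - 1) = (1 - t) + t * (w g / vs g)"
        by (simp add: algebra_simps)
      ultimately show ?thesis
        using t by linarith
    qed
    have eq: "((1 - t) * vs g + t * w g) / c g = (vs g / c g) * (1 + t * (w g / vs g - 1))"
      using vs[OF that] c[OF that] by (simp add: field_simps)
    have "ln ((vs g / c g) * (1 + t * (w g / vs g - 1))) = ln (vs g / c g) + ln (1 + t * (w g / vs g - 1))"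
      using pos vs[OF that] c[OF that] by (intro ln_mult_pos) auto
    then show ?thesis
      unfolding eq
      by (simp add: algebra_simps)
  qed
  then have "(\<Sum>g\<in>S. c g * ln (1 + t * (w g / vs g - 1)))
      = (\<Sum>g\<in>S. c g * ln (((1 - t) * vs g + t * w g) / c g)) - (\<Sum>g\<in>S. c g * ln (vs g / c g))"
    by (simp add: sum_subtractf[symmetric])
  then show "(\<Sum>g\<in>S. c g * ln (1 + t * (w g / vs g - 1))) \<le> 0"
    using max[of t] t by simp
qed (simp_all add: c vs w less_imp_le divide_nonneg_pos)

section \<open>Birkhoff sums\<close>

definition birkhoff_sum :: "('a \<Rightarrow> 'a) \<Rightarrow> ('a \<Rightarrow> real) \<Rightarrow> nat \<Rightarrow> 'a \<Rightarrow> real" where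
  "birkhoff_sum f \<phi> n x = (\<Sum>j<n. \<phi> ((f ^^ j) x))"

lemma birkhoff_sum_0 [simp]: "birkhoff_sum f \<phi> 0 x = 0"
  by (simp add: birkhoff_sum_def)

lemma birkhoff_sum_Suc: "birkhoff_sum f \<phi> (Suc n) x = birkhoff_sum f \<phi> n x + \<phi> ((f ^^ n) x)"
  by (simp add: birkhoff_sum_def)

lemma CX_birkhoff_sum [intro]:
  "continuous_on UNIV f \<Longrightarrow> \<phi> \<in> CX \<Longrightarrow> birkhoff_sum f \<phi> n \<in> CX"
  unfolding birkhoff_sum_def[abs_def] by (intro CX_sum CX_compose[OF _ continuous_on_funpow])

lemma birkhoff_sum_blocks:
  "birkhoff_sum f \<phi> (n * k) x = (\<Sum>r<n. birkhoff_sum (f ^^ n) \<phi> k ((f ^^ r) x))"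
proof -
  have "birkhoff_sum f \<phi> (n * k) x = (\<Sum>i<k. sum (\<lambda>j. \<phi> ((f ^^ j) x)) {i * n..<i * n + n})"
    unfolding birkhoff_sum_def by (simp add: sum.nat_group mult.commute)
  also have "\<dots> = (\<Sum>i<k. \<Sum>r<n. \<phi> ((f ^^ (r + i * n)) x))"
  proof (rule sum.cong[OF refl])
    fix i
    have "sum (\<lambda>j. \<phi> ((f ^^ j) x)) {i * n..<i * n + n}
        = sum (\<lambda>j. \<phi> ((f ^^ j) x)) {0 + i * n..<n + i * n}"
      by (simp add: add.commute)
    also have "\<dots> = (\<Sum>r<n. \<phi> ((f ^^ (r + i * n)) x))"
      by (simp only: sum.shift_bounds_nat_ivl atLeast0LessThan)
    finally show "sum (\<lambda>j. \<phi> ((f ^^ j) x)) {i * n..<i * n + n} = (\<Sum>r<n. \<phi> ((f ^^ (r + i * n)) x))" .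
  qed
  also have "\<dots> = (\<Sum>r<n. birkhoff_sum (f ^^ n) \<phi> k ((f ^^ r) x))"
  proof -
    have "((f ^^ n) ^^ i) ((f ^^ r) x) = (f ^^ (r + i * n)) x" for i r
      by (metis comp_apply funpow_add funpow_mult add.commute mult.commute)
    then show ?thesis
      unfolding birkhoff_sum_def by (simp add: sum.swap[of _ "{..<k}"])
  qed
  finally show ?thesis .
qed

lemma inv_states_funpow:
  assumes "\<mu> \<in> inv_states \<alpha>" "continuous_on UNIV \<alpha>" "f \<in> CX"
  shows "\<mu> (\<lambda>x. f ((\<alpha> ^^ j) x)) = \<mu> f"
  using assms(3)
proof (induction j arbitrary: f)
  case 0
  then show ?case by simp
next
  case (Suc j)
  have "(\<lambda>x. f (\<alpha> x)) \<in> CX"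
    using Suc.prems assms(2) by (rule CX_compose)
  then have "\<mu> (\<lambda>x. f ((\<alpha> ^^ Suc j) x)) = \<mu> (\<lambda>x. f (\<alpha> x))"
    using Suc.IH[of "\<lambda>x. f (\<alpha> x)"] by simp
  also have "\<dots> = \<mu> f"
    using Suc.prems assms(1) by (auto simp: inv_states_def)
  finally show ?case .
qed

lemma inv_states_birkhoff_sum:
  assumes "\<mu> \<in> inv_states \<alpha>" "continuous_on UNIV \<alpha>" "\<phi> \<in> CX"
  shows "\<mu> (birkhoff_sum \<alpha> \<phi> n) = n * \<mu> \<phi>"
proof -
  have "\<mu> \<in> states"
    using assms(1) by (simp add: inv_states_def)
  then have "\<mu> (birkhoff_sum \<alpha> \<phi> n) = (\<Sum>j<n. \<mu> (\<lambda>x. \<phi> ((\<alpha> ^^ j) x)))"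
    unfolding birkhoff_sum_def[abs_def]
    by (intro states_sum CX_compose[OF assms(3) continuous_on_funpow[OF assms(2)]]) auto
  then show ?thesis
    using inv_states_funpow[OF assms] by simp
qed

locale transfer_system =
  fixes \<alpha> :: "'a::topological_space \<Rightarrow> 'a" and A :: "('a \<Rightarrow> real) \<Rightarrow> ('a \<Rightarrow> real)"
  assumes compact_space: "compact (UNIV :: 'a set)"
    and continuous_\<alpha>: "continuous_on UNIV \<alpha>"
    and transfer: "transfer_operator \<alpha> A"
begin

lemma positive_op_iterate: "positive_op (A ^^ n)"
  using positive_op_funpow[OF transfer_operator_positive_op[OF transfer]] .

lemma CX_iterate [intro]: "f \<in> CX \<Longrightarrow> (A ^^ n) f \<in> CX"
  using positive_op_CX[OF positive_op_iterate] .

lemma iterate_nonneg: "f \<in> CX \<Longrightarrow> (\<And>x. f x \<ge> 0) \<Longrightarrow> (A ^^ n) f x \<ge> 0"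
  using positive_op_nonneg[OF positive_op_iterate] by blast

lemma iterate_homological:
  "f \<in> CX \<Longrightarrow> g \<in> CX \<Longrightarrow> (A ^^ n) (\<lambda>x. f ((\<alpha> ^^ n) x) * g x) = (\<lambda>x. f x * (A ^^ n) g x)"
  using transfer_operator_funpow[OF transfer continuous_\<alpha>] .

lemma CX_compose_iterate [intro]: "f \<in> CX \<Longrightarrow> (\<lambda>x. f ((\<alpha> ^^ n) x)) \<in> CX"
  using continuous_on_funpow[OF continuous_\<alpha>] by (rule CX_compose[rotated])

definition weighted_power :: "('a \<Rightarrow> real) \<Rightarrow> nat \<Rightarrow> 'a \<Rightarrow> real" where
  "weighted_power \<phi> n = (weighted_op A \<phi> ^^ n) (\<lambda>x. 1)"

definition log_norm :: "('a \<Rightarrow> real) \<Rightarrow> nat \<Rightarrow> ereal" where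
  "log_norm \<phi> n = eln (supnorm (weighted_power \<phi> n))"

lemma positive_op_weighted_iterate: "\<phi> \<in> CX \<Longrightarrow> positive_op (weighted_op A \<phi> ^^ n)"
  by (intro positive_op_funpow positive_op_weighted transfer_operator_positive_op[OF transfer])

lemma CX_weighted_power [intro]: "\<phi> \<in> CX \<Longrightarrow> weighted_power \<phi> n \<in> CX"
  unfolding weighted_power_def using positive_op_CX[OF positive_op_weighted_iterate] by auto

lemma weighted_power_nonneg:
  assumes "\<phi> \<in> CX"
  shows "0 \<le> weighted_power \<phi> n x"
  unfolding weighted_power_def
  using positive_op_nonneg[OF positive_op_weighted_iterate[OF assms] CX_const[of 1]] by simp

lemma weighted_power_eq_birkhoff:
  assumes "\<phi> \<in> CX"
  shows "weighted_power \<phi> n = (A ^^ n) (\<lambda>x. exp (birkhoff_sum \<alpha> \<phi> n x))"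
proof (induction n)
  case 0
  then show ?case by (simp add: weighted_power_def)
next
  case (Suc n)
  have "weighted_power \<phi> (Suc n) = A (\<lambda>x. exp (\<phi> x) * (A ^^ n) (\<lambda>x. exp (birkhoff_sum \<alpha> \<phi> n x)) x)"
    using Suc by (simp add: weighted_power_def weighted_op_def)
  also have "(\<lambda>x. exp (\<phi> x) * (A ^^ n) (\<lambda>x. exp (birkhoff_sum \<alpha> \<phi> n x)) x)
      = (A ^^ n) (\<lambda>x. exp (\<phi> ((\<alpha> ^^ n) x)) * exp (birkhoff_sum \<alpha> \<phi> n x))"
    using assms continuous_\<alpha> by (intro iterate_homological[symmetric]) auto
  finally show ?case
    by (simp add: birkhoff_sum_Suc exp_add mult.commute)
qed

lemma log_norm_subadditive:
  assumes "\<phi> \<in> CX"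
  shows "log_norm \<phi> (n + m) \<le> log_norm \<phi> n + log_norm \<phi> m"
proof -
  let ?W = "weighted_op A \<phi>"
  have norm_nonneg: "0 \<le> supnorm (weighted_power \<phi> k)" for k
    using supnorm_nonneg[OF compact_space CX_weighted_power[OF assms]] .
  have split: "weighted_power \<phi> (n + m) = (?W ^^ n) (weighted_power \<phi> m)"
    by (simp add: weighted_power_def funpow_add)
  have "weighted_power \<phi> (n + m) x \<le> supnorm (weighted_power \<phi> m) * supnorm (weighted_power \<phi> n)"
    for x
  proof -
    have "weighted_power \<phi> (n + m) x \<le> supnorm (weighted_power \<phi> m) * (?W ^^ n) (\<lambda>x. 1) x"
      unfolding split
      by (rule positive_op_le_supnorm[OF compact_space positive_op_weighted_iterate[OF assms]
            CX_weighted_power[OF assms]])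
    also have "\<dots> = supnorm (weighted_power \<phi> m) * weighted_power \<phi> n x"
      by (simp add: weighted_power_def)
    also have "\<dots> \<le> supnorm (weighted_power \<phi> m) * supnorm (weighted_power \<phi> n)"
      using le_supnorm[OF compact_space CX_weighted_power[OF assms]] norm_nonneg
      by (intro mult_left_mono) auto
    finally show ?thesis .
  qed
  then have "supnorm (weighted_power \<phi> (n + m))
      \<le> supnorm (weighted_power \<phi> m) * supnorm (weighted_power \<phi> n)"
    using weighted_power_nonneg[OF assms] by (intro supnorm_le_nonneg)
  then show ?thesis
    unfolding log_norm_def using norm_nonneg
    by (metis add.commute eln_mono eln_mult)
qed

lemma spectral_potential_eq_INF:
  assumes "\<phi> \<in> CX"
  shows "spectral_potential A \<phi> = (INF n\<in>{1..}. log_norm \<phi> n / ereal (real n))"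
proof -
  have "(\<lambda>n. log_norm \<phi> n / ereal (real n)) \<longlonglongrightarrow> (INF n\<in>{1..}. log_norm \<phi> n / ereal (real n))"
    by (rule fekete_ereal) (auto simp: log_norm_def log_norm_subadditive[OF assms, unfolded log_norm_def])
  then show ?thesis
    unfolding spectral_potential_def log_norm_def weighted_power_def by (rule limI)
qed

lemma spectral_potential_le_log_norm:
  "\<phi> \<in> CX \<Longrightarrow> n \<ge> 1 \<Longrightarrow> spectral_potential A \<phi> \<le> log_norm \<phi> n / ereal (real n)"
  unfolding spectral_potential_eq_INF by (rule INF_lower) auto

subsection \<open>The upper bound\<close>

lemma exp_partition_iterate_le:
  assumes m: "m \<in> states" and \<psi>: "\<psi> \<in> CX" and D: "partition_of_unity D"
    and s: "\<And>g x. g \<in> D \<Longrightarrow> g x > 0 \<Longrightarrow> \<bar>\<psi> x - s g\<bar> \<le> d"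
  shows "(\<Sum>g\<in>D. exp (s g) * m ((A ^^ n) g)) \<le> exp d * supnorm ((A ^^ n) (\<lambda>x. exp (\<psi> x)))"
proof -
  note D_fin = partition_of_unityD(1)[OF D] and D_CX = partition_of_unityD(2)[OF D]
  have sum_CX: "(\<lambda>x. \<Sum>g\<in>D. exp (s g) * g x) \<in> CX"
    using D_CX by (intro CX_sum CX_scale)
  have exp_CX: "(\<lambda>x. exp (\<psi> x)) \<in> CX"
    using \<psi> by auto
  have pointwise: "(\<Sum>g\<in>D. exp (s g) * g x) \<le> exp d * exp (\<psi> x)" for x
  proof -
    have "exp (s g) \<le> exp (d + \<psi> x)" if "g \<in> D" "g x > 0" for g
      using s[OF that] by simp
    then show ?thesis
      using partition_sum_le[OF D] by (simp add: exp_add)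
  qed
  have "(\<Sum>g\<in>D. exp (s g) * m ((A ^^ n) g)) = m (\<lambda>x. \<Sum>g\<in>D. exp (s g) * (A ^^ n) g x)"
    by (rule states_linear_combination[where f = "\<lambda>g. (A ^^ n) g", OF m D_fin CX_iterate[OF D_CX],
          symmetric])
  also have "\<dots> = m ((A ^^ n) (\<lambda>x. \<Sum>g\<in>D. exp (s g) * g x))"
    by (simp only: positive_op_linear_combination[where f = "\<lambda>g. g", OF positive_op_iterate D_fin D_CX])
  also have "\<dots> \<le> m ((A ^^ n) (\<lambda>x. exp d * exp (\<psi> x)))"
    using pointwise sum_CX CX_scale[OF exp_CX]
    by (intro states_mono[OF m] CX_iterate positive_op_mono[OF positive_op_iterate])
  also have "\<dots> = exp d * m ((A ^^ n) (\<lambda>x. exp (\<psi> x)))"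
    using positive_op_scale[OF positive_op_iterate exp_CX] states_scale[OF m CX_iterate[OF exp_CX]]
    by simp
  also have "\<dots> \<le> exp d * supnorm ((A ^^ n) (\<lambda>x. exp (\<psi> x)))"
    using states_le_supnorm[OF compact_space m CX_iterate[OF exp_CX]] by simp
  finally show ?thesis .
qed

lemma tau_nD_le_oscillation:
  assumes \<mu>: "\<mu> \<in> states" and \<psi>: "\<psi> \<in> CX" and D: "partition_of_unity D"
    and s: "\<And>g x. g \<in> D \<Longrightarrow> g x > 0 \<Longrightarrow> \<bar>\<psi> x - s g\<bar> \<le> d"
  shows "tau_nD A \<mu> n D \<le> eln (supnorm ((A ^^ n) (\<lambda>x. exp (\<psi> x)))) - ereal (\<mu> \<psi>) + ereal (2 * d)"
proof -
  define N where "N = supnorm ((A ^^ n) (\<lambda>x. exp (\<psi> x)))"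
  define S where "S = {g\<in>D. \<mu> g \<noteq> 0}"
  note D_facts = partition_of_unityD[OF D]
  have \<mu>_nonneg: "0 \<le> \<mu> g" if "g \<in> D" for g
    using D_facts(2,3) that by (intro states_nonneg[OF \<mu>]) auto
  have \<mu>_pos: "0 < \<mu> g" if "g \<in> S" for g
    using \<mu>_nonneg that unfolding S_def by force
  have S: "S \<subseteq> D" "finite S"
    using D_facts(1) unfolding S_def by auto
  have sum_S: "(\<Sum>g\<in>S. \<mu> g) = (\<Sum>g\<in>D. \<mu> g)" "(\<Sum>g\<in>S. \<mu> g * s g) = (\<Sum>g\<in>D. \<mu> g * s g)"
    using D_facts(1) unfolding S_def by (auto intro: sum.mono_neutral_left)
  have "(\<Sum>g\<in>D. if \<mu> g = 0 then 0 else ereal (\<mu> g) * eln (m ((A ^^ n) g) / \<mu> g))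
      \<le> eln N - ereal (\<mu> \<psi>) + ereal (2 * d)" if m: "m \<in> states" for m
  proof (cases "\<forall>g\<in>S. m ((A ^^ n) g) > 0")
    case True
    let ?X = "\<Sum>g\<in>S. exp (s g) * m ((A ^^ n) g)"
    have "0 \<le> m ((A ^^ n) g)" if "g \<in> D" for g
      using D_facts(2,3) that by (intro states_nonneg[OF m] CX_iterate iterate_nonneg) auto
    then have "?X \<le> (\<Sum>g\<in>D. exp (s g) * m ((A ^^ n) g))"
      using S D_facts(1) by (intro sum_mono2) auto
    also have "\<dots> \<le> exp d * N"
      unfolding N_def using exp_partition_iterate_le[OF m \<psi> D s] .
    finally have X_le: "?X \<le> exp d * N" .
    have X_pos: "0 < ?X"
      using True S sum_S states_partition_sum[OF \<mu> D] by (intro sum_pos) auto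
    then have "N > 0"
      using X_le by (smt (verit) exp_gt_zero zero_less_mult_iff)
    have "ln ?X \<le> ln (exp d * N)"
      using X_le X_pos \<open>N > 0\<close> by simp
    also have "\<dots> = d + ln N"
      using \<open>N > 0\<close> by (simp add: ln_mult_pos)
    finally have "ln ?X \<le> d + ln N" .
    moreover have "(\<Sum>g\<in>S. \<mu> g * ln (m ((A ^^ n) g) / \<mu> g)) \<le> ln ?X - (\<Sum>g\<in>S. \<mu> g * s g)"
      using True \<mu>_pos sum_S states_partition_sum[OF \<mu> D] S
      by (intro entropy_sum_le_ln_sum_exp) auto
    moreover have "\<mu> \<psi> - d \<le> (\<Sum>g\<in>S. \<mu> g * s g)"
      using states_le_partition_sum[OF \<mu> \<psi> D s] sum_S by simp
    ultimately show ?thesis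
      using entropy_sum_eq[where c = \<mu> and x = "\<lambda>g. m ((A ^^ n) g)", OF D_facts(1) \<mu>_nonneg,
          folded S_def] True \<open>N > 0\<close>
      by (simp add: eln_pos)
  next
    case False
    then show ?thesis
      using entropy_sum_eq[where c = \<mu> and x = "\<lambda>g. m ((A ^^ n) g)", OF D_facts(1) \<mu>_nonneg,
          folded S_def] by auto
  qed
  then show ?thesis
    unfolding tau_nD_def N_def by (rule SUP_least)
qed

lemma tau_n_le_log_norm:
  assumes \<mu>: "\<mu> \<in> inv_states \<alpha>" and \<phi>: "\<phi> \<in> CX"
  shows "tau_n A \<mu> n \<le> log_norm \<phi> n - ereal (n * \<mu> \<phi>)"
proof (rule ereal_le_epsilon2)
  fix e :: real
  assume "e > 0"
  then obtain D where D: "partition_of_unity D"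
    and osc: "\<forall>g\<in>D. \<exists>s. \<forall>x. g x > 0 \<longrightarrow> \<bar>birkhoff_sum \<alpha> \<phi> n x - s\<bar> \<le> e / 2"
    using partition_of_unity_small_oscillation[OF compact_space, of "birkhoff_sum \<alpha> \<phi> n" "e / 2"]
      \<phi> continuous_\<alpha> by auto
  then obtain s where s: "\<And>g x. g \<in> D \<Longrightarrow> g x > 0 \<Longrightarrow> \<bar>birkhoff_sum \<alpha> \<phi> n x - s g\<bar> \<le> e / 2"
    by metis
  have "tau_n A \<mu> n \<le> tau_nD A \<mu> n D"
    unfolding tau_n_def using D by (intro INF_lower) auto
  also have "\<dots> \<le> eln (supnorm ((A ^^ n) (\<lambda>x. exp (birkhoff_sum \<alpha> \<phi> n x))))
      - ereal (\<mu> (birkhoff_sum \<alpha> \<phi> n)) + ereal (2 * (e / 2))"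
    using \<mu> \<phi> continuous_\<alpha> D s
    by (intro tau_nD_le_oscillation) (auto simp: inv_states_def)
  also have "\<dots> = log_norm \<phi> n - ereal (n * \<mu> \<phi>) + ereal e"
    unfolding log_norm_def weighted_power_eq_birkhoff[OF \<phi>]
      inv_states_birkhoff_sum[OF \<mu> continuous_\<alpha> \<phi>] by simp
  finally show "tau_n A \<mu> n \<le> log_norm \<phi> n - ereal (n * \<mu> \<phi>) + ereal e" .
qed

lemma t_entropy_le:
  assumes \<mu>: "\<mu> \<in> inv_states \<alpha>" and \<phi>: "\<phi> \<in> CX"
  shows "t_entropy A \<mu> \<le> spectral_potential A \<phi> - ereal (\<mu> \<phi>)"
proof -
  have "t_entropy A \<mu> + ereal (\<mu> \<phi>) \<le> log_norm \<phi> n / ereal (real n)" if "n \<ge> 1" for n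
  proof -
    have "t_entropy A \<mu> \<le> tau_n A \<mu> n / ereal (real n)"
      unfolding t_entropy_def using that by (intro INF_lower) auto
    also have "\<dots> \<le> (log_norm \<phi> n - ereal (n * \<mu> \<phi>)) / ereal (real n)"
      using that by (intro ereal_divide_right_mono tau_n_le_log_norm[OF \<mu> \<phi>]) auto
    also have "\<dots> = log_norm \<phi> n / ereal (real n) - ereal (\<mu> \<phi>)"
      using that by (intro ereal_divide_minus) (auto simp: log_norm_def)
    finally show ?thesis
      by (cases "t_entropy A \<mu>"; cases "log_norm \<phi> n / ereal (real n)") auto
  qed
  then have "t_entropy A \<mu> + ereal (\<mu> \<phi>) \<le> spectral_potential A \<phi>"
    unfolding spectral_potential_eq_INF[OF \<phi>] by (intro INF_greatest) auto
  then show ?thesis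
    by (cases "t_entropy A \<mu>"; cases "spectral_potential A \<phi>") auto
qed

subsection \<open>Growth of blocked iterates\<close>

lemma blocked_iterate_le:
  assumes \<psi>: "\<psi> \<in> CX"
  shows "(A ^^ (n * j)) (\<lambda>x. exp (birkhoff_sum (\<alpha> ^^ n) \<psi> j x)) x
    \<le> supnorm ((A ^^ n) (\<lambda>x. exp (\<psi> x))) ^ j"
proof (induction j arbitrary: x)
  case 0
  then show ?case by simp
next
  case (Suc j)
  define N where "N = supnorm ((A ^^ n) (\<lambda>x. exp (\<psi> x)))"
  define Q where "Q = (A ^^ (n * j)) (\<lambda>x. exp (birkhoff_sum (\<alpha> ^^ n) \<psi> j x))"
  have exp_CX: "(\<lambda>x. exp (\<psi> x)) \<in> CX"
    using \<psi> by auto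
  have B_CX: "birkhoff_sum (\<alpha> ^^ n) \<psi> j \<in> CX"
    using \<psi> continuous_\<alpha> by (intro CX_birkhoff_sum continuous_on_funpow)
  have Q_CX: "Q \<in> CX"
    unfolding Q_def using B_CX by auto
  have Q_le: "Q x \<le> N ^ j" for x
    using Suc.IH unfolding Q_def N_def .
  have N_nonneg: "N \<ge> 0"
    unfolding N_def using supnorm_nonneg[OF compact_space CX_iterate[OF exp_CX]] .
  have "(A ^^ (n * Suc j)) (\<lambda>x. exp (birkhoff_sum (\<alpha> ^^ n) \<psi> (Suc j) x))
      = (A ^^ n) ((A ^^ (n * j)) (\<lambda>x. exp (\<psi> ((\<alpha> ^^ (n * j)) x)) * exp (birkhoff_sum (\<alpha> ^^ n) \<psi> j x)))"
    by (simp add: funpow_add funpow_mult birkhoff_sum_Suc exp_add mult.commute)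
  also have "(A ^^ (n * j)) (\<lambda>x. exp (\<psi> ((\<alpha> ^^ (n * j)) x)) * exp (birkhoff_sum (\<alpha> ^^ n) \<psi> j x))
      = (\<lambda>x. exp (\<psi> x) * Q x)"
    unfolding Q_def using exp_CX B_CX by (intro iterate_homological) auto
  finally have "(A ^^ (n * Suc j)) (\<lambda>x. exp (birkhoff_sum (\<alpha> ^^ n) \<psi> (Suc j) x)) x
      = (A ^^ n) (\<lambda>x. exp (\<psi> x) * Q x) x"
    by simp
  also have "\<dots> \<le> (A ^^ n) (\<lambda>x. N ^ j * exp (\<psi> x)) x"
    using Q_CX exp_CX Q_le
    by (intro positive_op_mono[OF positive_op_iterate]) (auto simp: mult.commute)
  also have "\<dots> = N ^ j * (A ^^ n) (\<lambda>x. exp (\<psi> x)) x"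
    using positive_op_scale[OF positive_op_iterate exp_CX] by simp
  also have "\<dots> \<le> N ^ j * N"
    unfolding N_def using le_supnorm[OF compact_space CX_iterate[OF exp_CX]] N_nonneg
    by (intro mult_left_mono) (auto simp: N_def)
  finally show ?case
    by (simp add: N_def mult.commute)
qed

lemma shifted_blocked_iterate_le:
  assumes \<psi>: "\<psi> \<in> CX" and r: "r < n"
  shows "(A ^^ (n * Suc k)) (\<lambda>x. exp (birkhoff_sum (\<alpha> ^^ n) \<psi> (Suc k) ((\<alpha> ^^ r) x))) x
    \<le> supnorm ((A ^^ r) (\<lambda>x. 1)) * supnorm (\<lambda>x. exp (\<psi> x))
      * supnorm ((A ^^ n) (\<lambda>x. exp (\<psi> x))) ^ k * supnorm ((A ^^ (n - r)) (\<lambda>x. 1))"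
proof -
  define R where "R = supnorm ((A ^^ r) (\<lambda>x. 1))"
  define E where "E = supnorm (\<lambda>x. exp (\<psi> x))"
  define N where "N = supnorm ((A ^^ n) (\<lambda>x. exp (\<psi> x)))"
  define V where "V = birkhoff_sum (\<alpha> ^^ n) \<psi> (Suc k)"
  have exp_CX: "(\<lambda>x. exp (\<psi> x)) \<in> CX"
    using \<psi> by auto
  have B_CX: "birkhoff_sum (\<alpha> ^^ n) \<psi> j \<in> CX" for j
    using \<psi> continuous_\<alpha> by (intro CX_birkhoff_sum continuous_on_funpow)
  have exp_V_CX: "(\<lambda>x. exp (V x)) \<in> CX"
    unfolding V_def using B_CX by auto
  have R: "R \<ge> 0" and E: "E \<ge> 0" and N: "N \<ge> 0"
    unfolding R_def E_def N_def
    using supnorm_nonneg[OF compact_space CX_iterate[OF CX_const]]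
      supnorm_nonneg[OF compact_space exp_CX] supnorm_nonneg[OF compact_space CX_iterate[OF exp_CX]]
    by auto
  text \<open>Split \<open>A ^^ (n * Suc k)\<close> as \<open>A ^^ (n - r) \<circ> A ^^ (n * k) \<circ> A ^^ r\<close>: the shift by
    \<open>\<alpha> ^^ r\<close> is absorbed by \<open>A ^^ r\<close>, the last block of the Birkhoff sum by \<open>A ^^ (n * k)\<close>.\<close>
  have split: "A ^^ (n * Suc k) = (A ^^ (n - r)) \<circ> (A ^^ (n * k)) \<circ> (A ^^ r)"
  proof -
    have "n * Suc k = (n - r) + n * k + r"
      using r by simp
    then show ?thesis
      by (simp only: funpow_add)
  qed
  define G where "G x = exp (V x) * (A ^^ r) (\<lambda>x. 1) x" for x
  have "(A ^^ r) (\<lambda>x. exp (V ((\<alpha> ^^ r) x))) = G"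
    using iterate_homological[OF exp_V_CX CX_const[of 1], of r] unfolding G_def by simp
  then have shifted: "(A ^^ (n * Suc k)) (\<lambda>x. exp (V ((\<alpha> ^^ r) x))) = (A ^^ (n - r)) ((A ^^ (n * k)) G)"
    using split by simp
  have G_CX: "G \<in> CX"
    unfolding G_def[abs_def] using exp_V_CX by (intro CX_mult CX_iterate CX_const)
  have G_le: "G x \<le> R * exp (V x)" for x
    unfolding G_def R_def using le_supnorm[OF compact_space CX_iterate[OF CX_const[of 1]], of r x]
    by (simp add: mult.commute mult_left_mono)
  define H where "H x = exp (\<psi> x) * (A ^^ (n * k)) (\<lambda>x. exp (birkhoff_sum (\<alpha> ^^ n) \<psi> k x)) x" for x
  have middle: "(A ^^ (n * k)) (\<lambda>x. exp (V x)) = H"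
  proof -
    have "(\<lambda>x. exp (V x)) = (\<lambda>x. exp (\<psi> ((\<alpha> ^^ (n * k)) x)) * exp (birkhoff_sum (\<alpha> ^^ n) \<psi> k x))"
      unfolding V_def by (simp add: birkhoff_sum_Suc funpow_mult exp_add mult.commute)
    then show ?thesis
      unfolding H_def[abs_def] using iterate_homological[OF exp_CX CX_exp[OF B_CX], of "n * k"] by simp
  qed
  have H_CX: "H \<in> CX"
    unfolding H_def[abs_def] using \<psi> B_CX by (intro CX_mult CX_iterate CX_exp)
  have H_le: "H x \<le> E * N ^ k" for x
    unfolding H_def E_def N_def
    using blocked_iterate_le[OF \<psi>, of n k x] le_supnorm[OF compact_space exp_CX, of x] E
      iterate_nonneg[OF CX_exp[OF B_CX], of k "n * k" x]
    by (intro mult_mono) (auto simp: E_def)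
  have "(A ^^ (n * Suc k)) (\<lambda>x. exp (V ((\<alpha> ^^ r) x))) x \<le> (A ^^ (n - r)) ((A ^^ (n * k)) (\<lambda>x. R * exp (V x))) x"
    unfolding shifted using G_CX exp_V_CX G_le
    by (intro positive_op_mono[OF positive_op_iterate] CX_iterate CX_scale) auto
  also have "\<dots> = R * (A ^^ (n - r)) H x"
    using positive_op_scale[OF positive_op_iterate exp_V_CX, of "n * k" R]
      positive_op_scale[OF positive_op_iterate H_CX, of "n - r" R] middle by simp
  also have "\<dots> \<le> R * (E * N ^ k * supnorm ((A ^^ (n - r)) (\<lambda>x. 1)))"
    using positive_op_const_bound[OF compact_space positive_op_iterate H_CX H_le] E N R
    by (intro mult_left_mono) auto
  finally show ?thesis
    unfolding V_def R_def E_def N_def by (simp add: mult.assoc)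
qed

lemma weighted_power_block_le:
  assumes \<psi>: "\<psi> \<in> CX" and n: "n \<ge> 1"
  shows "\<exists>C. \<forall>k. supnorm (weighted_power (\<lambda>x. \<psi> x / real n) (n * Suc k))
    \<le> C * supnorm ((A ^^ n) (\<lambda>x. exp (\<psi> x))) ^ k"
proof -
  define \<phi> where "\<phi> x = \<psi> x / real n" for x
  define N where "N = supnorm ((A ^^ n) (\<lambda>x. exp (\<psi> x)))"
  define C where "C = (\<Sum>r<n. supnorm ((A ^^ r) (\<lambda>x. 1)) * supnorm (\<lambda>x. exp (\<psi> x))
      * supnorm ((A ^^ (n - r)) (\<lambda>x. 1)))"
  have \<phi>: "\<phi> \<in> CX"
    unfolding \<phi>_def[abs_def] using \<psi> by auto
  have "weighted_power \<phi> (n * Suc k) x \<le> C * N ^ k" for k x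
  proof -
    define W where "W r x = birkhoff_sum (\<alpha> ^^ n) \<psi> (Suc k) ((\<alpha> ^^ r) x)" for r x
    have exp_W_CX: "(\<lambda>x. exp (W r x)) \<in> CX" for r
      unfolding W_def using \<psi> continuous_\<alpha>
      by (intro CX_exp CX_compose_iterate CX_birkhoff_sum continuous_on_funpow)
    have jensen: "exp (birkhoff_sum \<alpha> \<phi> (n * Suc k) x) \<le> (\<Sum>r<n. (1 / real n) * exp (W r x))" for x
    proof -
      have "birkhoff_sum \<alpha> \<phi> (n * Suc k) x = (\<Sum>r<n. birkhoff_sum (\<alpha> ^^ n) \<phi> (Suc k) ((\<alpha> ^^ r) x))"
        by (rule birkhoff_sum_blocks)
      also have "\<dots> = (\<Sum>r<n. (1 / real n) * W r x)"
        unfolding W_def \<phi>_def birkhoff_sum_def by (simp add: sum_divide_distrib add_divide_distrib)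
      finally have "birkhoff_sum \<alpha> \<phi> (n * Suc k) x = (\<Sum>r<n. (1 / real n) * W r x)" .
      then show ?thesis
        using n by (simp only:) (rule exp_sum_le_sum_exp, auto simp: lessThan_empty_iff)
    qed
    have "weighted_power \<phi> (n * Suc k) x \<le> (A ^^ (n * Suc k)) (\<lambda>x. \<Sum>r<n. (1 / real n) * exp (W r x)) x"
      unfolding weighted_power_eq_birkhoff[OF \<phi>]
      using CX_exp[OF CX_birkhoff_sum[OF continuous_\<alpha> \<phi>]] exp_W_CX jensen
      by (intro positive_op_mono[OF positive_op_iterate] CX_sum CX_scale)
    also have "\<dots> = (\<Sum>r<n. (1 / real n) * (A ^^ (n * Suc k)) (\<lambda>x. exp (W r x)) x)"
      using positive_op_linear_combination[where f = "\<lambda>r x. exp (W r x)" and a = "\<lambda>_. 1 / real n",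
          OF positive_op_iterate finite_lessThan exp_W_CX] by simp
    also have "\<dots> \<le> (\<Sum>r<n. supnorm ((A ^^ r) (\<lambda>x. 1)) * supnorm (\<lambda>x. exp (\<psi> x))
        * N ^ k * supnorm ((A ^^ (n - r)) (\<lambda>x. 1)))"
    proof (rule sum_mono)
      fix r
      assume "r \<in> {..<n}"
      then have "(A ^^ (n * Suc k)) (\<lambda>x. exp (W r x)) x \<le> supnorm ((A ^^ r) (\<lambda>x. 1))
          * supnorm (\<lambda>x. exp (\<psi> x)) * N ^ k * supnorm ((A ^^ (n - r)) (\<lambda>x. 1))"
        unfolding W_def N_def by (intro shifted_blocked_iterate_le[OF \<psi>]) simp
      moreover have "0 \<le> (A ^^ (n * Suc k)) (\<lambda>x. exp (W r x)) x"
        using exp_W_CX by (intro iterate_nonneg) auto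
      then have "(1 / real n) * (A ^^ (n * Suc k)) (\<lambda>x. exp (W r x)) x \<le> (A ^^ (n * Suc k)) (\<lambda>x. exp (W r x)) x"
        using n by (intro mult_left_le_one_le) auto
      ultimately show "(1 / real n) * (A ^^ (n * Suc k)) (\<lambda>x. exp (W r x)) x \<le> supnorm ((A ^^ r) (\<lambda>x. 1))
          * supnorm (\<lambda>x. exp (\<psi> x)) * N ^ k * supnorm ((A ^^ (n - r)) (\<lambda>x. 1))"
        by linarith
    qed
    also have "\<dots> = C * N ^ k"
      unfolding C_def sum_distrib_right by (simp add: mult_ac)
    finally show ?thesis .
  qed
  then have "supnorm (weighted_power \<phi> (n * Suc k)) \<le> C * N ^ k" for k
    using weighted_power_nonneg[OF \<phi>] by (intro supnorm_le_nonneg)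
  then show ?thesis
    unfolding \<phi>_def N_def by blast
qed

lemma spectral_potential_scaled_le:
  assumes \<psi>: "\<psi> \<in> CX" and n: "n \<ge> 1"
  shows "spectral_potential A (\<lambda>x. \<psi> x / real n)
    \<le> eln (supnorm ((A ^^ n) (\<lambda>x. exp (\<psi> x)))) / ereal (real n)"
proof -
  have \<phi>: "(\<lambda>x. \<psi> x / real n) \<in> CX"
    using \<psi> by auto
  obtain C where C: "\<And>k. supnorm (weighted_power (\<lambda>x. \<psi> x / real n) (n * Suc k))
      \<le> C * supnorm ((A ^^ n) (\<lambda>x. exp (\<psi> x))) ^ k"
    using weighted_power_block_le[OF \<psi> n] by blast
  have N: "0 \<le> supnorm ((A ^^ n) (\<lambda>x. exp (\<psi> x)))"
    using \<psi> by (intro supnorm_nonneg[OF compact_space] CX_iterate CX_exp)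
  have "spectral_potential A (\<lambda>x. \<psi> x / real n)
      \<le> eln (supnorm (weighted_power (\<lambda>x. \<psi> x / real n) (n * Suc k))) / ereal (real (n * Suc k))"
    for k
    using spectral_potential_le_log_norm[OF \<phi>, of "n * Suc k"] n unfolding log_norm_def by simp
  from ereal_le_eln_of_geometric_bound[OF n N this C] show ?thesis .
qed

subsection \<open>The lower bound\<close>

lemma tau_nD_maximizer:
  assumes \<mu>: "\<mu> \<in> states" and D: "partition_of_unity D" and T: "tau_nD A \<mu> n D = ereal T"
  defines "S \<equiv> {g\<in>D. \<mu> g \<noteq> 0}"
  obtains vs where "\<And>g. g \<in> S \<Longrightarrow> vs g > 0" "(\<Sum>g\<in>S. \<mu> g * ln (vs g / \<mu> g)) = T"
    "\<And>m. m \<in> states \<Longrightarrow> (\<Sum>g\<in>S. \<mu> g * (m ((A ^^ n) g) / vs g)) \<le> 1"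
proof -
  note D_facts = partition_of_unityD[OF D]
  define V where "V = (\<lambda>m g. m ((A ^^ n) g)) ` states"
  define f where "f v = (\<Sum>g\<in>S. \<mu> g * ln (v g / \<mu> g))" for v :: "('a \<Rightarrow> real) \<Rightarrow> real"
  have \<mu>_nonneg: "0 \<le> \<mu> g" if "g \<in> D" for g
    using D_facts(2,3) that by (intro states_nonneg[OF \<mu>]) auto
  have \<mu>_pos: "0 < \<mu> g" if "g \<in> S" for g
    using \<mu>_nonneg that unfolding S_def by force
  have S: "finite S" "S \<subseteq> D"
    using D_facts(1) unfolding S_def by auto
  have "(\<Sum>g\<in>S. \<mu> g) = (\<Sum>g\<in>D. \<mu> g)"
    using D_facts(1) unfolding S_def by (auto intro: sum.mono_neutral_left)
  then have sum_S: "(\<Sum>g\<in>S. \<mu> g) = 1"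
    using states_partition_sum[OF \<mu> D] by simp
  have term_eq: "(\<Sum>g\<in>D. if \<mu> g = 0 then 0 else ereal (\<mu> g) * eln (m ((A ^^ n) g) / \<mu> g))
      = (if \<forall>g\<in>S. m ((A ^^ n) g) > 0 then ereal (f (\<lambda>g. m ((A ^^ n) g))) else -\<infinity>)" for m
    unfolding f_def S_def by (rule entropy_sum_eq[OF D_facts(1) \<mu>_nonneg])
  have tau_eq: "(SUP m\<in>states. (if \<forall>g\<in>S. m ((A ^^ n) g) > 0
      then ereal (f (\<lambda>g. m ((A ^^ n) g))) else -\<infinity>)) = ereal T"
    using T unfolding tau_nD_def term_eq .
  obtain vs where vs: "\<And>g. g \<in> S \<Longrightarrow> vs g > 0" "f vs = T"
    and vs_max: "\<And>w t. w \<in> V \<Longrightarrow> 0 < t \<Longrightarrow> t < 1 \<Longrightarrow> f (\<lambda>g. (1 - t) * vs g + t * w g) \<le> T"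
  proof (rule entropy_maximizer[of S \<mu> V "\<lambda>g. supnorm ((A ^^ n) g)" T, folded f_def])
    show "0 \<le> v g \<and> v g \<le> supnorm ((A ^^ n) g)" if "v \<in> V" "g \<in> S" for v g
    proof -
      obtain m where m: "m \<in> states" and v: "v = (\<lambda>g. m ((A ^^ n) g))"
        using \<open>v \<in> V\<close> unfolding V_def by blast
      have "g \<in> CX" "\<And>x. 0 \<le> g x"
        using that S D_facts(2,3) by auto
      then show ?thesis
        unfolding v using states_nonneg[OF m CX_iterate iterate_nonneg]
          states_le_supnorm[OF compact_space m CX_iterate] by blast
    qed
    show "(\<lambda>g. (1 - t) * v g + t * w g) \<in> V" if "v \<in> V" "w \<in> V" "0 \<le> t" "t \<le> 1" for v w t
      using that states_convex unfolding V_def by fastforce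
    show "f v \<le> T" if "v \<in> V" "\<forall>g\<in>S. v g > 0" for v
    proof -
      obtain m where m: "m \<in> states" and v: "v = (\<lambda>g. m ((A ^^ n) g))"
        using \<open>v \<in> V\<close> unfolding V_def by blast
      have "(if \<forall>g\<in>S. m ((A ^^ n) g) > 0 then ereal (f (\<lambda>g. m ((A ^^ n) g))) else -\<infinity>) \<le> ereal T"
        unfolding tau_eq[symmetric] using m by (rule SUP_upper)
      then show ?thesis
        using that(2) unfolding v by simp
    qed
    show "\<exists>v\<in>V. (\<forall>g\<in>S. v g > 0) \<and> T - e < f v" if "e > 0" for e
    proof -
      have "ereal (T - e) < (SUP m\<in>states. (if \<forall>g\<in>S. m ((A ^^ n) g) > 0
          then ereal (f (\<lambda>g. m ((A ^^ n) g))) else -\<infinity>))"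
        using that tau_eq by simp
      then obtain m where "m \<in> states"
        "ereal (T - e) < (if \<forall>g\<in>S. m ((A ^^ n) g) > 0 then ereal (f (\<lambda>g. m ((A ^^ n) g))) else -\<infinity>)"
        unfolding less_SUP_iff by blast
      then show ?thesis
        unfolding V_def by (auto split: if_splits)
    qed
  qed (use S \<mu>_pos in auto)
  have "(\<Sum>g\<in>S. \<mu> g * (m ((A ^^ n) g) / vs g)) \<le> 1" if "m \<in> states" for m
  proof -
    have "(\<lambda>g. m ((A ^^ n) g)) \<in> V"
      using that unfolding V_def by blast
    then have max: "f (\<lambda>g. (1 - t) * vs g + t * m ((A ^^ n) g)) \<le> f vs" if "0 < t" "t < 1" for t
      using vs_max that vs(2) by simp
    have nonneg: "0 \<le> m ((A ^^ n) g)" if "g \<in> S" for g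
      using \<open>g \<in> S\<close> S D_facts(2,3)
      by (intro states_nonneg[OF \<open>m \<in> states\<close>] CX_iterate iterate_nonneg) auto
    show ?thesis
      using entropy_maximizer_first_order[where c = \<mu> and vs = vs and w = "\<lambda>g. m ((A ^^ n) g)",
          OF S(1) \<mu>_pos vs(1) nonneg max[unfolded f_def]] sum_S by simp
  qed
  then show ?thesis
    using that vs unfolding f_def by blast
qed

lemma iterate_weighted_partition_le:
  assumes D: "partition_of_unity D" and S: "S \<subseteq> D" and \<epsilon>: "\<epsilon> \<ge> 0"
    and opt: "(\<Sum>g\<in>S. c g * ((A ^^ n) g x / vs g)) \<le> 1"
  shows "(A ^^ n) (\<lambda>x. \<Sum>g\<in>D. (if g \<in> S then c g / vs g else \<epsilon>) * g x) x
    \<le> 1 + \<epsilon> * (\<Sum>g\<in>D. supnorm ((A ^^ n) g))"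
proof -
  note D_facts = partition_of_unityD[OF D]
  define w where "w g = (if g \<in> S then c g / vs g else \<epsilon>)" for g
  have "(A ^^ n) (\<lambda>x. \<Sum>g\<in>D. w g * g x) x = (\<Sum>g\<in>D. w g * (A ^^ n) g x)"
    using positive_op_linear_combination[where f = "\<lambda>g. g", OF positive_op_iterate D_facts(1,2)] by simp
  also have "\<dots> = (\<Sum>g\<in>D - S. w g * (A ^^ n) g x) + (\<Sum>g\<in>S. w g * (A ^^ n) g x)"
    by (rule sum.subset_diff[OF S D_facts(1)])
  also have "\<dots> = (\<Sum>g\<in>D - S. \<epsilon> * (A ^^ n) g x) + (\<Sum>g\<in>S. c g * ((A ^^ n) g x / vs g))"
    unfolding w_def by (intro arg_cong2[where f = "(+)"] sum.cong) auto
  also have "\<dots> \<le> (\<Sum>g\<in>D. \<epsilon> * supnorm ((A ^^ n) g)) + 1"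
  proof (rule add_mono[OF _ opt])
    have "(\<Sum>g\<in>D - S. \<epsilon> * (A ^^ n) g x) \<le> (\<Sum>g\<in>D - S. \<epsilon> * supnorm ((A ^^ n) g))"
      using D_facts(2) \<epsilon> by (intro sum_mono mult_left_mono le_supnorm[OF compact_space] CX_iterate) auto
    also have "\<dots> \<le> (\<Sum>g\<in>D. \<epsilon> * supnorm ((A ^^ n) g))"
      using D_facts(1,2) \<epsilon>
      by (intro sum_mono2 mult_nonneg_nonneg supnorm_nonneg[OF compact_space] CX_iterate) auto
    finally show "(\<Sum>g\<in>D - S. \<epsilon> * (A ^^ n) g x) \<le> (\<Sum>g\<in>D. \<epsilon> * supnorm ((A ^^ n) g))" .
  qed
  finally show ?thesis
    unfolding w_def by (simp add: sum_distrib_left)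
qed

lemma exists_potential_below_of_finite:
  assumes \<mu>: "\<mu> \<in> states" and D: "partition_of_unity D" and T: "tau_nD A \<mu> n D = ereal T"
    and K: "T < K"
  shows "\<exists>\<psi>\<in>CX. eln (supnorm ((A ^^ n) (\<lambda>x. exp (\<psi> x)))) - ereal (\<mu> \<psi>) < ereal K"
proof -
  note D_facts = partition_of_unityD[OF D]
  define S where "S = {g\<in>D. \<mu> g \<noteq> 0}"
  obtain vs where vs_pos: "\<And>g. g \<in> S \<Longrightarrow> vs g > 0"
    and vs_T: "(\<Sum>g\<in>S. \<mu> g * ln (vs g / \<mu> g)) = T"
    and vs_opt: "\<And>m. m \<in> states \<Longrightarrow> (\<Sum>g\<in>S. \<mu> g * (m ((A ^^ n) g) / vs g)) \<le> 1"
    using tau_nD_maximizer[OF \<mu> D T] unfolding S_def by blast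
  have \<mu>_pos: "0 < \<mu> g" if "g \<in> S" for g
    using that D_facts(2,3) states_nonneg[OF \<mu>] unfolding S_def by force
  define H where "H = (\<Sum>g\<in>D. supnorm ((A ^^ n) g))"
  have H: "0 \<le> H"
    unfolding H_def using D_facts(2)
    by (intro sum_nonneg supnorm_nonneg[OF compact_space] CX_iterate)
  text \<open>The weight \<open>\<epsilon>\<close> on the partition elements of \<open>\<mu>\<close>-measure zero is chosen so small
    that they add less than \<open>K - T\<close> to the logarithm.\<close>
  obtain \<epsilon> where \<epsilon>: "\<epsilon> > 0" "1 + \<epsilon> * H < exp (K - T)"
    using exists_pos_add_mult_less[OF H, of "exp (K - T)"] K by auto
  define w where "w g = (if g \<in> S then \<mu> g / vs g else \<epsilon>)" for g
  have w_pos: "w g > 0" for g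
    unfolding w_def using \<mu>_pos vs_pos \<epsilon> by simp
  define \<psi> where "\<psi> x = ln (\<Sum>g\<in>D. w g * g x)" for x
  have sum_pos: "0 < (\<Sum>g\<in>D. w g * g x)" for x
    using partition_weighted_sum_pos[OF D w_pos] .
  have \<psi>: "\<psi> \<in> CX"
    unfolding \<psi>_def[abs_def] using D_facts(2) sum_pos by (intro CX_ln CX_sum CX_scale)
  have exp_\<psi>: "(\<lambda>x. exp (\<psi> x)) = (\<lambda>x. \<Sum>g\<in>D. w g * g x)"
    unfolding \<psi>_def using sum_pos by simp
  have "(A ^^ n) (\<lambda>x. exp (\<psi> x)) x \<le> 1 + \<epsilon> * H" for x
    unfolding exp_\<psi> w_def H_def using \<epsilon>(1)
    by (intro iterate_weighted_partition_le[OF D _ _ vs_opt[OF states_point_eval]]) (auto simp: S_def)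
  then have norm: "supnorm ((A ^^ n) (\<lambda>x. exp (\<psi> x))) \<le> 1 + \<epsilon> * H"
    using \<psi> by (intro supnorm_le_nonneg iterate_nonneg CX_exp) auto
  have "- T = (\<Sum>g\<in>S. \<mu> g * ln (w g))"
    unfolding vs_T[symmetric] sum_negf[symmetric]
  proof (rule sum.cong)
    show "- (\<mu> g * ln (vs g / \<mu> g)) = \<mu> g * ln (w g)" if "g \<in> S" for g
      using \<mu>_pos[OF that] vs_pos[OF that] that by (simp add: w_def ln_div algebra_simps)
  qed simp
  also have "\<dots> = (\<Sum>g\<in>D. \<mu> g * ln (w g))"
    using D_facts(1) unfolding S_def by (intro sum.mono_neutral_left) auto
  also have "\<dots> \<le> \<mu> \<psi>"
    unfolding \<psi>_def[abs_def] using states_ln_partition_ge[OF \<mu> D w_pos] .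
  finally have "- T \<le> \<mu> \<psi>" .
  moreover have "ln (1 + \<epsilon> * H) < K - T"
    using \<epsilon> H by (metis add_pos_nonneg exp_less_cancel_iff exp_ln mult_nonneg_nonneg
        zero_less_one less_imp_le)
  ultimately have "ln (1 + \<epsilon> * H) - \<mu> \<psi> < K"
    by linarith
  then show ?thesis
    using \<psi> eln_diff_less[OF norm] by blast
qed

lemma exists_potential_below_of_vanishing:
  assumes \<mu>: "\<mu> \<in> states" and D: "partition_of_unity D" and g0: "g0 \<in> D" "\<mu> g0 > 0"
    and vanishing: "\<And>x. (A ^^ n) g0 x = 0"
  shows "\<exists>\<psi>\<in>CX. eln (supnorm ((A ^^ n) (\<lambda>x. exp (\<psi> x)))) - ereal (\<mu> \<psi>) < ereal K"
proof -
  note D_facts = partition_of_unityD[OF D]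
  have g0_CX: "g0 \<in> CX" and g0_nonneg: "\<And>x. 0 \<le> g0 x"
    using D_facts(2,3) g0(1) by auto
  have g0_le: "g0 x \<le> 1" for x
    using member_le_sum[of g0 D "\<lambda>g. g x"] D_facts(1,3,4) g0(1) by auto
  define B where "B = supnorm ((A ^^ n) (\<lambda>x. 1))"
  define t where "t = (\<bar>ln B\<bar> + \<bar>K\<bar> + 1) / \<mu> g0"
  define \<psi> where "\<psi> x = t * g0 x" for x
  have t: "t \<ge> 0"
    unfolding t_def using g0(2) by simp
  have \<psi>: "\<psi> \<in> CX"
    unfolding \<psi>_def[abs_def] using g0_CX by (rule CX_scale)
  text \<open>By convexity \<open>e\<^sup>\<psi> \<le> 1 + (e\<^sup>t - 1) g\<^sub>0\<close>, and \<open>A\<^sup>n\<close> kills the second summand.\<close>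
  have "(A ^^ n) (\<lambda>x. exp (\<psi> x)) x \<le> B" for x
  proof -
    have "exp (\<psi> x) \<le> 1 + (exp t - 1) * g0 x" for x
      using convex_onD[OF exp_convex, of "g0 x" 0 t] g0_nonneg[of x] g0_le[of x]
      unfolding \<psi>_def by (simp add: algebra_simps)
    then have "(A ^^ n) (\<lambda>x. exp (\<psi> x)) x \<le> (A ^^ n) (\<lambda>x. 1 + (exp t - 1) * g0 x) x"
      using \<psi> g0_CX by (intro positive_op_mono[OF positive_op_iterate]) auto
    also have "\<dots> = (A ^^ n) (\<lambda>x. 1) x"
      using positive_op_add[OF positive_op_iterate CX_const CX_scale[OF g0_CX]]
        positive_op_scale[OF positive_op_iterate g0_CX] vanishing by simp
    also have "\<dots> \<le> B"
      unfolding B_def by (rule le_supnorm[OF compact_space CX_iterate[OF CX_const]])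
    finally show ?thesis .
  qed
  then have norm: "supnorm ((A ^^ n) (\<lambda>x. exp (\<psi> x))) \<le> B"
    using \<psi> by (intro supnorm_le_nonneg iterate_nonneg CX_exp) auto
  have \<mu>\<psi>: "\<mu> \<psi> = \<bar>ln B\<bar> + \<bar>K\<bar> + 1"
    unfolding \<psi>_def[abs_def] states_scale[OF \<mu> g0_CX] t_def using g0(2) by simp
  have "ln B - \<mu> \<psi> < K"
    unfolding \<mu>\<psi> using abs_ge_self[of "ln B"] abs_ge_self[of K] by linarith
  then show ?thesis
    using \<psi> eln_diff_less[OF norm] by blast
qed

lemma tau_nD_MInf_imp_vanishing:
  assumes \<mu>: "\<mu> \<in> states" and D: "partition_of_unity D" and MInf: "tau_nD A \<mu> n D = -\<infinity>"
  shows "\<exists>g\<in>D. \<mu> g > 0 \<and> (\<forall>x. (A ^^ n) g x = 0)"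
proof (rule ccontr)
  assume no_vanishing: "\<not> ?thesis"
  note D_facts = partition_of_unityD[OF D]
  define S where "S = {g\<in>D. \<mu> g \<noteq> 0}"
  have \<mu>_nonneg: "0 \<le> \<mu> g" if "g \<in> D" for g
    using D_facts(2,3) that by (intro states_nonneg[OF \<mu>]) auto
  have iterate_g_nonneg: "0 \<le> (A ^^ n) g x" if "g \<in> D" for g x
    using D_facts(2,3) that by (intro iterate_nonneg) auto
  have "\<exists>x. (A ^^ n) g x > 0" if "g \<in> S" for g
  proof -
    have g: "g \<in> D" "\<mu> g > 0"
      using that \<mu>_nonneg unfolding S_def by force+
    then obtain x where "(A ^^ n) g x \<noteq> 0"
      using no_vanishing by blast
    then show ?thesis
      using iterate_g_nonneg[OF g(1), of x] by (intro exI[of _ x]) simp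
  qed
  then obtain x where x: "\<And>g. g \<in> S \<Longrightarrow> (A ^^ n) g (x g) > 0"
    by metis
  have S: "finite S" "S \<noteq> {}"
  proof -
    show "finite S"
      using D_facts(1) unfolding S_def by simp
    have "(\<Sum>g\<in>D. \<mu> g) \<noteq> 0"
      using states_partition_sum[OF \<mu> D] by simp
    then show "S \<noteq> {}"
      unfolding S_def by (metis (mono_tags, lifting) empty_Collect_eq sum.neutral)
  qed
  text \<open>Averaging the point evaluations at the witnesses \<open>x g\<close> yields a state under which
    every \<open>A\<^sup>n g\<close> with \<open>\<mu>[g] > 0\<close> has positive mass, so the entropy sum is finite.\<close>
  define m where "m f = (\<Sum>g\<in>S. f (x g)) / card S" for f :: "'a \<Rightarrow> real"
  have m: "m \<in> states"
    unfolding m_def using states_average_point_evals[OF S] .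
  have "m ((A ^^ n) g) > 0" if "g \<in> S" for g
  proof -
    have "0 < (\<Sum>h\<in>S. (A ^^ n) g (x h))"
      using S(1) that x iterate_g_nonneg[of g] unfolding S_def by (intro sum_pos2[of _ g]) auto
    then show ?thesis
      unfolding m_def using S by (simp add: card_gt_0_iff)
  qed
  then have "(\<Sum>g\<in>D. if \<mu> g = 0 then 0 else ereal (\<mu> g) * eln (m ((A ^^ n) g) / \<mu> g)) \<noteq> -\<infinity>"
    using entropy_sum_eq[where c = \<mu> and x = "\<lambda>g. m ((A ^^ n) g)", OF D_facts(1) \<mu>_nonneg,
        folded S_def] by simp
  moreover have "(\<Sum>g\<in>D. if \<mu> g = 0 then 0 else ereal (\<mu> g) * eln (m ((A ^^ n) g) / \<mu> g))
      \<le> tau_nD A \<mu> n D"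
    unfolding tau_nD_def using m by (rule SUP_upper)
  ultimately show False
    using MInf by simp
qed

lemma exists_potential_below_tau_nD:
  assumes \<mu>: "\<mu> \<in> states" and D: "partition_of_unity D" and K: "tau_nD A \<mu> n D < ereal K"
  shows "\<exists>\<psi>\<in>CX. eln (supnorm ((A ^^ n) (\<lambda>x. exp (\<psi> x)))) - ereal (\<mu> \<psi>) < ereal K"
proof (cases "tau_nD A \<mu> n D")
  case (real T)
  then show ?thesis
    using K by (intro exists_potential_below_of_finite[OF \<mu> D real]) simp
next
  case MInf
  then show ?thesis
    using tau_nD_MInf_imp_vanishing[OF \<mu> D] exists_potential_below_of_vanishing[OF \<mu> D] by blast
qed (use K in simp)

lemma exists_potential_below_tau_n:
  assumes \<mu>: "\<mu> \<in> states" and n: "n \<ge> 1" and Y: "tau_n A \<mu> n < ereal (Y * real n)"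
  shows "\<exists>\<phi>\<in>CX. spectral_potential A \<phi> - ereal (\<mu> \<phi>) \<le> ereal Y"
proof -
  obtain D where D: "partition_of_unity D" "tau_nD A \<mu> n D < ereal (Y * real n)"
    using Y unfolding tau_n_def by (auto simp: INF_less_iff)
  obtain \<psi> where \<psi>: "\<psi> \<in> CX"
    and less: "eln (supnorm ((A ^^ n) (\<lambda>x. exp (\<psi> x)))) - ereal (\<mu> \<psi>) < ereal (Y * real n)"
    using exists_potential_below_tau_nD[OF \<mu> D] by blast
  define \<phi> where "\<phi> x = \<psi> x / real n" for x
  have \<phi>: "\<phi> \<in> CX"
    unfolding \<phi>_def[abs_def] using \<psi> by auto
  have \<mu>\<phi>: "\<mu> \<phi> = \<mu> \<psi> / real n"
    unfolding \<phi>_def[abs_def] using states_scale[OF \<mu> \<psi>, of "1 / real n"] by simp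
  have "spectral_potential A \<phi> \<le> eln (supnorm ((A ^^ n) (\<lambda>x. exp (\<psi> x)))) / ereal (real n)"
    unfolding \<phi>_def[abs_def] using spectral_potential_scaled_le[OF \<psi> n] .
  then have "spectral_potential A \<phi> - ereal (\<mu> \<phi>) \<le> ereal Y"
    using less n \<mu>\<phi>
    by (cases "supnorm ((A ^^ n) (\<lambda>x. exp (\<psi> x))) > 0")
      (auto simp: eln_pos eln_nonpos ereal_divide field_simps
        intro: order.trans[OF ereal_minus_mono[OF _ order.refl]])
  then show ?thesis
    using \<phi> by blast
qed

lemma t_entropy_ge:
  assumes \<mu>: "\<mu> \<in> inv_states \<alpha>"
  shows "(INF \<phi>\<in>CX. spectral_potential A \<phi> - ereal (\<mu> \<phi>)) \<le> t_entropy A \<mu>"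
  unfolding t_entropy_def
proof (rule INF_greatest)
  fix n :: nat
  assume n: "n \<in> {1..}"
  show "(INF \<phi>\<in>CX. spectral_potential A \<phi> - ereal (\<mu> \<phi>)) \<le> tau_n A \<mu> n / ereal (real n)"
  proof (rule dense_ge)
    fix y
    assume y: "tau_n A \<mu> n / ereal (real n) < y"
    show "(INF \<phi>\<in>CX. spectral_potential A \<phi> - ereal (\<mu> \<phi>)) \<le> y"
    proof (cases y)
      case (real Y)
      then have "tau_n A \<mu> n < ereal (Y * real n)"
        using y n by (simp add: ereal_divide_less_iff mult.commute)
      then obtain \<phi> where "\<phi> \<in> CX" "spectral_potential A \<phi> - ereal (\<mu> \<phi>) \<le> y"
        using exists_potential_below_tau_n[of \<mu> n Y] \<mu> n real by (auto simp: inv_states_def)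
      then show ?thesis
        by (meson INF_lower2)
    qed (use y in auto)
  qed
qed

end

theorem theorem1p9:
  fixes \<alpha> :: "'a::t2_space \<Rightarrow> 'a"
    and A :: "('a \<Rightarrow> real) \<Rightarrow> ('a \<Rightarrow> real)"
    and \<mu> :: "('a \<Rightarrow> real) \<Rightarrow> real"
  assumes "compact (UNIV :: 'a set)"
    and "continuous_on UNIV \<alpha>"
    and "transfer_operator \<alpha> A"
    and "\<mu> \<in> inv_states \<alpha>"
  shows "t_entropy A \<mu> = (INF \<phi>\<in>CX. spectral_potential A \<phi> - ereal (\<mu> \<phi>))"
proof -
  interpret transfer_system \<alpha> A
    using assms(1-3) by unfold_locales
  show ?thesis
    using t_entropy_le[OF assms(4)] t_entropy_ge[OF assms(4)] by (intro antisym INF_greatest) auto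
qed

end
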